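(* Under the model described in the context, with the improper prior $f(\textbf{q})=1$ on the bypass location parameters $\textbf{q}\in\mathbb{R}^N$, the posterior distribution of $(\bm{\zeta}^{\prime},\textbf{q}^{\prime})^{\prime}$ given $\textbf{z}$ is $$(\bm{\zeta}^{\prime},\textbf{q}^{\prime})^{\prime}\mid\textbf{z}\sim\mathrm{GCM}(\bm{\alpha}_{M},\bm{\kappa}_{M},\bm{\mu}_{M},\textbf{V}_{M},\pi,\textbf{D};\bm{\psi}_{M}),$$ with $\textbf{V}_{M}^{-1}=(\textbf{H},\textbf{Q})$ and $\bm{\mu}_{M}=\begin{pmatrix}(\textbf{H}^{\prime}\textbf{H})^{-1}\textbf{H}^{\prime}\\ \textbf{Q}^{\prime}\end{pmatrix}\textbf{c}$, i.e. $\textbf{V}_M\textbf{c}$, where $\textbf{c}=(\bm{0}_{1,n_{1}+n_{2}+n_{3}},\textbf{z}_{4}^{\prime},\bm{0}_{1,N+p+r})^{\prime}$; that is, the posterior density of $(\bm\zeta,\textbf q)$ is proportional to $\int_\Omega \frac{\pi(\bm\theta)}{|\det \textbf D(\bm\theta)|}\exp[\bm{\alpha}_{M}^{\prime}\textbf{D}(\bm{\theta})^{-1}\{(\textbf{H},\textbf{Q})(\bm\zeta',\textbf q')'-\textbf c\}-\bm{\kappa}_{M}^{\prime}\bm{\psi}_{M}(\textbf{D}(\bm{\theta})^{-1}\{(\textbf{H},\textbf{Q})(\bm\zeta',\textbf q')'-\textbf c\})]d\bm\theta$, and it is exactly that GCM density.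
   Context: Notation: $\bm{0}_{a,b}$, $\bm{1}_{a,b}$ are the $a\times b$ zero and ones matrices, $\textbf{I}_n$ the identity, $\mathrm{blkdiag}$ the block-diagonal operator. $\psi_1(x)=x^2$, $\psi_2(x)=e^x$, $\psi_3(x)=\log(1+e^x)$, $\psi_4(x)=\log(1+x^2/\nu)$ with known $\nu>0$. A univariate DY density with unit log-partition $\psi$ and parameters $(\alpha,\kappa)$ is $\mathcal{N}(\alpha,\kappa)\exp\{\alpha w-\kappa\psi(w)\}$ ($\mathcal N$ the normalizing constant). $\mathrm{GCM}(\bm{\alpha},\bm{\kappa},\bm{\mu},\textbf{V},\pi,\textbf{D};\bm{\psi})$ on $\mathbb{R}^M$ denotes the law of $\bm{\mu}+\textbf{V}\textbf{D}(\bm{\theta})\textbf{w}$, where $\bm\theta\in\Omega$ has proper density $\pi$, $\textbf D(\bm\theta)$ is invertible, $\textbf V$ invertible, and $\textbf w$ (independent of $\bm\theta$) has independent coordinates, coordinate $l$ having DY density with parameters $(\alpha_l,\kappa_l)$ and unit log-partition $\psi_{(l)}$, where $\bm\psi=(\psi_{(1)},\ldots,\psi_{(M)})$ acts coordinatewise; its density is $\int_\Omega\pi(\bm\theta)\frac{\prod_l\mathcal N(\alpha_l,\kappa_l)}{|\det\textbf D(\bm\theta)||\det\textbf V|}\exp[\bm\alpha'\textbf D(\bm\theta)^{-1}\textbf V^{-1}(\textbf y-\bm\mu)-\bm\kappa'\bm\psi\{\textbf D(\bm\theta)^{-1}\textbf V^{-1}(\textbf y-\bm\mu)\}]d\bm\theta$.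 Model: data $\textbf{z}=(\textbf{z}_1',\ldots,\textbf{z}_4')'$, $\textbf{z}_k=(Z_{k,1},\ldots,Z_{k,n_k})'$, $N=n_1+\cdots+n_4$, latent $\textbf{y}_k=(Y_{k,1},\ldots,Y_{k,n_k})'$; conditionally independently, $Z_{1,i}\mid Y_{1,i}\sim N(Y_{1,i},\sigma_i^2)$ with $\sigma_i^2>0$ known, $Z_{2,i}\mid Y_{2,i}\sim\mathrm{Poisson}(e^{Y_{2,i}})$, $Z_{3,i}\mid Y_{3,i}\sim\mathrm{Binomial}(m_i,e^{Y_{3,i}}/(1+e^{Y_{3,i}}))$ with known $\textbf m=(m_1,\ldots,m_{n_3})'$, and $Z_{4,i}\mid Y_{4,i}$ has density proportional to $\{1+(Z_{4,i}-Y_{4,i})^2/\nu\}^{-(\nu+1)/2}$. $\textbf{D}_\sigma=\mathrm{diag}(1/\sigma_i^2)$. With known $\textbf X_k$ ($n_k\times p$), $\textbf G_k$ ($n_k\times r$), $\textbf X=(\textbf X_1',\ldots,\textbf X_4')'$, $\textbf G=(\textbf G_1',\ldots,\textbf G_4')'$, set $\textbf y=(\textbf y_1',\ldots,\textbf y_4')'=\textbf X\bm\beta+\textbf G\bm\eta+\bm\xi-\bm\mu_D$, where $\bm\mu_D=(\bm\mu_1',\ldots,\bm\mu_4')'\in\mathbb R^N$, and $\bm\zeta=(\bm\xi',\bm\beta',\bm\eta')'\in\mathbb R^{N+p+r}$. Let $\bm\theta\in\Omega$ have proper prior $\pi$, with invertible $\textbf D_\beta(\bm\theta)$ ($p\times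 p$) and $\textbf D_\eta(\bm\theta)$ ($r\times r$). Prior factor for $\bm\beta$: $|\det\textbf D_\beta(\bm\theta)|^{-1}\exp[\bm\alpha_\beta'\textbf D_\beta(\bm\theta)^{-1}(\bm\beta-\bm\mu_\beta)-\bm\kappa_\beta'\bm\psi_\beta\{\textbf D_\beta(\bm\theta)^{-1}(\bm\beta-\bm\mu_\beta)\}]$ with known $\bm\alpha_\beta,\bm\kappa_\beta$ and coordinatewise DY unit log-partitions $\bm\psi_\beta$; analogously for $\bm\eta$ with $\textbf D_\eta,\bm\mu_\eta,\bm\alpha_\eta,\bm\kappa_\eta,\bm\psi_\eta$. Prior factor for $\bm\xi$ (fixed $\sigma_\xi^2>0$, $\alpha_\xi>0$): $\exp[\bm\alpha_\xi'(\textbf A\bm\zeta-\textbf m_\xi)-\bm\kappa_\xi'\bm\psi_\xi(\textbf A\bm\zeta-\textbf m_\xi)]$ with $\textbf A=\begin{pmatrix}\textbf I_N&\textbf X&\textbf G\\ \sigma_\xi^{-2}\textbf I_N&\bm 0_{N,p}&\bm 0_{N,r}\end{pmatrix}$, $\textbf m_\xi=(\bm\mu_D',\bm\mu_\xi')'$, $\bm\alpha_\xi=(\bm 0_{1,n_1},\alpha_\xi\bm 1_{1,n_2},\alpha_\xi\bm 1_{1,n_3},\bm 0_{1,n_4+N})'$, $\bm\kappa_\xi=(\bm 0_{1,n_1+n_2},2\alpha_\xi\bm 1_{1,n_3},\bm 0_{1,n_4},\frac12\bm 1_{1,N})'$, and $\bm\psi_\xi$ applying $\psi_k$ to the $k$-th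 block of the first $N$ coordinates and $\psi_1$ to the last $N$. Let $\textbf H=\begin{pmatrix}\textbf I_N&\textbf X&\textbf G\\ \bm0_{p,N}&\textbf I_p&\bm0_{p,r}\\ \bm0_{r,N}&\bm0_{r,p}&\textbf I_r\\ \textbf I_N&\bm0_{N,p}&\bm0_{N,r}\end{pmatrix}$ ($(2N+p+r)\times(N+p+r)$) and $\textbf Q$ a $(2N+p+r)\times N$ matrix with orthonormal columns satisfying $\textbf H'\textbf Q=\bm0$ (so $\textbf Q\textbf Q'=\textbf I-\textbf H(\textbf H'\textbf H)^{-1}\textbf H'$). Let $\textbf D(\bm\theta)^{-1}=\mathrm{blkdiag}(\textbf I_N,\textbf D_\beta(\bm\theta)^{-1},\textbf D_\eta(\bm\theta)^{-1},\sigma_\xi^{-2}\textbf I_N)$. The location parameters satisfy $(\bm\mu_D',\bm\mu_\beta',\bm\mu_\eta',\bm\mu_\xi')'=-\textbf D(\bm\theta)^{-1}\textbf Q\textbf q$ for the bypass location parameter $\textbf q\in\mathbb R^N$. The posterior is defined by $f(\bm\zeta,\textbf q\mid\textbf z)\propto\int_\Omega\pi(\bm\theta)f(\textbf z\mid\bm\zeta,\textbf q)\,[\bm\xi\text{ factor}][\bm\beta\text{ factor}][\bm\eta\text{ factor}]f(\textbf q)\,d\bm\theta$. Parameters: $\bm\alpha_M=(\textbf z_1'\textbf D_\sigma,\textbf z_2'+\alpha_\xi\bm1_{1,n_2},\textbf z_3'+\alpha_\xi\bm1_{1,n_3},\bm0_{1,n_4},\bm\alpha_\beta',\bm\alpha_\eta',\bm0_{1,N})'$,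 $\bm\kappa_M=(\frac12\bm1_{1,n_1}\textbf D_\sigma,\bm1_{1,n_2},\textbf m'+2\alpha_\xi\bm1_{1,n_3},\frac{\nu+1}2\bm1_{1,n_4},\bm\kappa_\beta',\bm\kappa_\eta',\frac12\bm1_{1,N})'$, and $\bm\psi_M$ applies $\psi_k$ to the $k$-th data block of the first $N$ coordinates, $\bm\psi_\beta$ to the next $p$, $\bm\psi_\eta$ to the next $r$, and $\psi_1$ to the last $N$. *)

theory Defs
  imports "Jordan_Normal_Form.Gauss_Jordan_Elimination" "Jordan_Normal_Form.Determinant"
          "HOL-Analysis.Lebesgue_Measure"
begin

hide_type (open) Finite_Cartesian_Product.vec
hide_const (open) Finite_Cartesian_Product.vec Finite_Cartesian_Product.vec_nth
no_notation Finite_Cartesian_Product.vec_nth (infixl \<open>$\<close> 90)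

definition minv :: "real mat \<Rightarrow> real mat" where
  "minv A = the (mat_inverse A)"

definition hcat :: "real mat \<Rightarrow> real mat \<Rightarrow> real mat" where
  "hcat A B = four_block_mat A B (0\<^sub>m 0 (dim_col A)) (0\<^sub>m 0 (dim_col B))"

definition psi_vec :: "(nat \<Rightarrow> real \<Rightarrow> real) \<Rightarrow> real vec \<Rightarrow> real vec" where
  "psi_vec psis w = vec (dim_vec w) (\<lambda>l. psis l (w $ l))"

definition psi1 :: "real \<Rightarrow> real" where "psi1 x = x\<^sup>2"
definition psi2 :: "real \<Rightarrow> real" where "psi2 x = exp x"
definition psi3 :: "real \<Rightarrow> real" where "psi3 x = ln (1 + exp x)"
definition psi4 :: "real \<Rightarrow> real \<Rightarrow> real" where "psi4 \<nu> x = ln (1 + x\<^sup>2 / \<nu>)"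

definition dy_kernel :: "(real \<Rightarrow> real) \<Rightarrow> real \<Rightarrow> real \<Rightarrow> real \<Rightarrow> real" where
  "dy_kernel psi a k w = exp (a * w - k * psi w)"

definition dy_valid :: "(real \<Rightarrow> real) \<Rightarrow> real \<Rightarrow> real \<Rightarrow> bool" where
  "dy_valid psi a k \<longleftrightarrow> integrable lborel (dy_kernel psi a k)"

definition dy_norm :: "(real \<Rightarrow> real) \<Rightarrow> real \<Rightarrow> real \<Rightarrow> real" where
  "dy_norm psi a k = 1 / (\<integral>w. dy_kernel psi a k w \<partial>lborel)"

text \<open>Density of GCM(alpha, kappa, mu, V, pi, D; psis) at y, where theta ranges over
  the space of the measure M (Omega) and pi is a density w.r.t. M.\<close>
definition gcm_density ::
  "'t measure \<Rightarrow> ('t \<Rightarrow> real) \<Rightarrow> real vec \<Rightarrow> real vec \<Rightarrow> real vec \<Rightarrow> real mat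
   \<Rightarrow> ('t \<Rightarrow> real mat) \<Rightarrow> (nat \<Rightarrow> real \<Rightarrow> real) \<Rightarrow> real vec \<Rightarrow> real" where
  "gcm_density M dens alpha kappa mu V D psis y =
     (\<integral>\<theta>. (let w = minv (D \<theta>) *\<^sub>v (minv V *\<^sub>v (y - mu)) in
        dens \<theta> * (\<Prod>l<dim_vec alpha. dy_norm (psis l) (alpha $ l) (kappa $ l))
          / (\<bar>det (D \<theta>)\<bar> * \<bar>det V\<bar>)
          * exp (scalar_prod alpha w - scalar_prod kappa (psi_vec psis w))) \<partial>M)"

definition dy_prior_factor ::
  "real mat \<Rightarrow> real vec \<Rightarrow> real vec \<Rightarrow> real vec \<Rightarrow> (nat \<Rightarrow> real \<Rightarrow> real) \<Rightarrow> real vec \<Rightarrow> real" where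
  "dy_prior_factor Dm mu a k psis x =
     (let w = minv Dm *\<^sub>v (x - mu) in
      exp (scalar_prod a w - scalar_prod k (psi_vec psis w)) / \<bar>det Dm\<bar>)"

definition normal_pdf :: "real \<Rightarrow> real \<Rightarrow> real \<Rightarrow> real" where
  "normal_pdf mean var x = exp (- (x - mean)\<^sup>2 / (2 * var)) / sqrt (2 * pi * var)"

definition poisson_pmf :: "real \<Rightarrow> nat \<Rightarrow> real" where
  "poisson_pmf lam k = exp (- lam) * lam ^ k / fact k"

definition binomial_pmf_real :: "nat \<Rightarrow> real \<Rightarrow> nat \<Rightarrow> real" where
  "binomial_pmf_real m p k = real (m choose k) * p ^ k * (1 - p) ^ (m - k)"

definition t_kernel :: "real \<Rightarrow> real \<Rightarrow> real" where
  "t_kernel \<nu> u = (1 + u\<^sup>2 / \<nu>) powr (- (\<nu> + 1) / 2)"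

definition t_pdf :: "real \<Rightarrow> real \<Rightarrow> real \<Rightarrow> real" where
  "t_pdf \<nu> loc x = t_kernel \<nu> (x - loc) / (\<integral>u. t_kernel \<nu> u \<partial>lborel)"

text \<open>Coordinates: blocks of sizes n1,n2,n3,n4 (N = n1+n2+n3+n4), 0-based indices.\<close>

definition H_mat :: "nat \<Rightarrow> nat \<Rightarrow> nat \<Rightarrow> real mat \<Rightarrow> real mat \<Rightarrow> real mat" where
  "H_mat N p r X G =
     hcat (1\<^sub>m N) (hcat X G)
     @\<^sub>r hcat (0\<^sub>m p N) (hcat (1\<^sub>m p) (0\<^sub>m p r))
     @\<^sub>r hcat (0\<^sub>m r N) (hcat (0\<^sub>m r p) (1\<^sub>m r))
     @\<^sub>r hcat (1\<^sub>m N) (hcat (0\<^sub>m N p) (0\<^sub>m N r))"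

definition A_mat :: "nat \<Rightarrow> nat \<Rightarrow> nat \<Rightarrow> real mat \<Rightarrow> real mat \<Rightarrow> real \<Rightarrow> real mat" where
  "A_mat N p r X G s2xi =
     hcat (1\<^sub>m N) (hcat X G)
     @\<^sub>r hcat ((1 / s2xi) \<cdot>\<^sub>m 1\<^sub>m N) (hcat (0\<^sub>m N p) (0\<^sub>m N r))"

definition D_mat :: "nat \<Rightarrow> real mat \<Rightarrow> real mat \<Rightarrow> real \<Rightarrow> real mat" where
  "D_mat N Db De s2xi = diag_block_mat [1\<^sub>m N, Db, De, s2xi \<cdot>\<^sub>m 1\<^sub>m N]"

definition psi_xi :: "nat \<Rightarrow> nat \<Rightarrow> nat \<Rightarrow> nat \<Rightarrow> real \<Rightarrow> nat \<Rightarrow> real \<Rightarrow> real" where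
  "psi_xi n1 n2 n3 N \<nu> l =
     (if l < n1 then psi1 else if l < n1 + n2 then psi2 else if l < n1 + n2 + n3 then psi3
      else if l < N then psi4 \<nu> else psi1)"

definition psi_M :: "nat \<Rightarrow> nat \<Rightarrow> nat \<Rightarrow> nat \<Rightarrow> nat \<Rightarrow> nat \<Rightarrow> real
    \<Rightarrow> (nat \<Rightarrow> real \<Rightarrow> real) \<Rightarrow> (nat \<Rightarrow> real \<Rightarrow> real) \<Rightarrow> nat \<Rightarrow> real \<Rightarrow> real" where
  "psi_M n1 n2 n3 N p r \<nu> psib psie l =
     (if l < n1 then psi1 else if l < n1 + n2 then psi2 else if l < n1 + n2 + n3 then psi3
      else if l < N then psi4 \<nu> else if l < N + p then psib (l - N)
      else if l < N + p + r then psie (l - N - p) else psi1)"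

text \<open>Likelihood f(z | zeta, q) as a function of the latent vector y (length N).\<close>
definition likelihood ::
  "nat \<Rightarrow> nat \<Rightarrow> nat \<Rightarrow> nat \<Rightarrow> real vec \<Rightarrow> nat vec \<Rightarrow> nat vec \<Rightarrow> real vec
   \<Rightarrow> real vec \<Rightarrow> nat vec \<Rightarrow> real \<Rightarrow> real vec \<Rightarrow> real" where
  "likelihood n1 n2 n3 n4 z1 z2 z3 z4 sigma2 m \<nu> y =
     (\<Prod>i<n1. normal_pdf (y $ i) (sigma2 $ i) (z1 $ i))
     * (\<Prod>i<n2. poisson_pmf (exp (y $ (n1 + i))) (z2 $ i))
     * (\<Prod>i<n3. binomial_pmf_real (m $ i)
          (exp (y $ (n1 + n2 + i)) / (1 + exp (y $ (n1 + n2 + i)))) (z3 $ i))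
     * (\<Prod>i<n4. t_pdf \<nu> (y $ (n1 + n2 + n3 + i)) (z4 $ i))"

end

(*
  Every factor of the unnormalized posterior is a Diaconis--Ylvisaker kernel.  As a function of
  the latent vector y, the normal, Poisson, binomial and t likelihoods are DY kernels of y - c with
  log-partitions psi1, psi2, psi3 and psi4 (the t block is centred at z4), and the prior of xi adds
  DY kernels of the same types in y and in xi/sigma_xi^2 - mu_xi; beta and eta carry their own DY
  priors.  All arguments are blocks of one vector: (H, Q) (zeta, q) - c lists y - c, beta - mu_beta,
  eta - mu_eta and xi - sigma_xi^2 mu_xi, because Q q = -(mu_D, mu_beta, mu_eta, sigma_xi^2 mu_xi).
  Hence, for each theta, the integrand equals a constant times the integrand of the GCM density
  with parameters alpha_M, kappa_M, D(theta) and V_M^-1 = (H, Q); the latter matrix is invertible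
  with inverse ((H'H)^-1 H' ; Q') because Q spans the orthogonal complement of the columns of H.
*)

theory Submission
  imports Defs "HOL-Analysis.Equivalence_Lebesgue_Henstock_Integration"
begin

hide_type (open) Finite_Cartesian_Product.vec
hide_const (open) Finite_Cartesian_Product.vec Finite_Cartesian_Product.vec_nth
no_notation Finite_Cartesian_Product.vec_nth (infixl \<open>$\<close> 90)

section \<open>Integrability of Diaconis--Ylvisaker kernels\<close>

lemma integrable_lborel_one_plus_abs_powr:
  fixes s :: real
  assumes "s > 1"
  shows "integrable lborel (\<lambda>x. (1 + \<bar>x\<bar>) powr (-s))"
proof -
  define f :: "real \<Rightarrow> real" where "f = (\<lambda>x. indicator {1..} x * x powr (-s))"
  have "(\<lambda>x. x powr (-s)) absolutely_integrable_on {1..}"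
    using has_integral_powr_to_inf[of "-s" 1] assms
    by (intro nonnegative_absolutely_integrable_1) (auto simp: integrable_on_def)
  then have "integrable (completion lborel) f"
    by (simp add: set_integrable_def f_def)
  moreover have "f \<in> borel_measurable lborel"
    unfolding f_def by measurable
  ultimately have f: "integrable lborel f"
    using integrable_completion by blast
  have "integrable lborel (\<lambda>x. f (1 + x) + f (1 - x))"
    using lborel_integrable_real_affine_iff[of 1 f 1] lborel_integrable_real_affine_iff[of "-1" f 1] f
    by simp
  then show ?thesis
  proof (rule Bochner_Integration.integrable_bound)
    show "AE x in lborel. norm ((1 + \<bar>x\<bar>) powr (-s)) \<le> norm (f (1 + x) + f (1 - x))"
      by (intro AE_I2) (auto simp: f_def indicator_def)
  qed measurable
qed

lemma integrable_lborel_exp_linear_decay: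
  fixes e :: "real \<Rightarrow> real"
  assumes "(\<lambda>w. exp (e w)) \<in> borel_measurable lborel" and "\<epsilon> > 0"
    and "\<And>w. e w \<le> c - \<epsilon> * \<bar>w\<bar>"
  shows "integrable lborel (\<lambda>w. exp (e w))"
proof (rule Bochner_Integration.integrable_bound)
  define \<mu> where "\<mu> = min 1 (\<epsilon> / 2)"
  have \<mu>: "\<mu> > 0" "\<mu> \<le> 1" "\<mu> \<le> \<epsilon> / 2"
    using assms(2) by (auto simp: \<mu>_def)
  show "integrable lborel (\<lambda>w. exp c / \<mu>\<^sup>2 * (1 + \<bar>w\<bar>) powr (-2))"
    using integrable_lborel_one_plus_abs_powr[of 2] by simp
  show "AE w in lborel. norm (exp (e w)) \<le> norm (exp c / \<mu>\<^sup>2 * (1 + \<bar>w\<bar>) powr (-2))"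
  proof (intro AE_I2)
    fix w :: real
    \<comment> \<open>\<open>exp x \<ge> (1 + x/2)\<^sup>2\<close> turns exponential decay into decay of order two\<close>
    have "\<mu> * \<bar>w\<bar> \<le> \<epsilon> / 2 * \<bar>w\<bar>"
      using \<mu> by (intro mult_right_mono) auto
    then have "\<mu> * (1 + \<bar>w\<bar>) \<le> 1 + \<epsilon> * \<bar>w\<bar> / 2"
      using \<mu> by (simp add: algebra_simps)
    also have "\<dots> \<le> exp (\<epsilon> * \<bar>w\<bar> / 2)"
      by (rule exp_ge_add_one_self)
    finally have "(\<mu> * (1 + \<bar>w\<bar>))\<^sup>2 \<le> (exp (\<epsilon> * \<bar>w\<bar> / 2))\<^sup>2"
      using \<mu> by (intro power_mono) auto
    also have "\<dots> = exp (\<epsilon> * \<bar>w\<bar>)"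
      by (simp add: power2_eq_square exp_add[symmetric])
    finally have bound: "\<mu>\<^sup>2 * (1 + \<bar>w\<bar>)\<^sup>2 \<le> exp (\<epsilon> * \<bar>w\<bar>)"
      by (simp add: power_mult_distrib)
    have "exp (e w) \<le> exp c / exp (\<epsilon> * \<bar>w\<bar>)"
      using assms(3)[of w] by (simp add: exp_diff[symmetric])
    also have "\<dots> \<le> exp c / (\<mu>\<^sup>2 * (1 + \<bar>w\<bar>)\<^sup>2)"
      using bound \<mu> by (intro divide_left_mono) (auto intro!: mult_pos_pos)
    also have "\<dots> = exp c / \<mu>\<^sup>2 * (1 + \<bar>w\<bar>) powr (-2)"
      by (simp add: powr_minus powr_numeral divide_inverse)
    finally show "norm (exp (e w)) \<le> norm (exp c / \<mu>\<^sup>2 * (1 + \<bar>w\<bar>) powr (-2))"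
      by simp
  qed
qed (use assms(1) in simp)

lemma integral_lborel_pos:
  fixes f :: "real \<Rightarrow> real"
  assumes "integrable lborel f" and "\<And>x. f x > 0"
  shows "(\<integral>x. f x \<partial>lborel) > 0"
proof -
  have "AE x in lborel. 0 \<le> f x"
    using assms(2) by (simp add: less_imp_le)
  moreover have "\<not> (AE x in lborel. f x = 0)"
  proof
    assume "AE x in lborel. f x = 0"
    then have "AE x::real in lborel. False"
      using assms(2) by (auto elim: AE_mp intro!: AE_I2 simp: less_le)
    then show False
      by (simp add: trivial_limit_def[symmetric] ae_filter_eq_bot_iff emeasure_lborel_UNIV)
  qed
  ultimately show ?thesis
    using integral_nonneg_eq_0_iff_AE[OF assms(1)] integral_nonneg_AE[of f lborel]
    by (simp add: order_less_le)
qed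

lemma dy_norm_pos:
  assumes "dy_valid psi a k"
  shows "dy_norm psi a k > 0"
  using integral_lborel_pos[of "dy_kernel psi a k"] assms
  by (simp add: dy_norm_def dy_valid_def dy_kernel_def)

lemma continuous_imp_borel_measurable_lborel:
  fixes f :: "real \<Rightarrow> real"
  assumes "continuous_on UNIV f"
  shows "f \<in> borel_measurable lborel"
  using borel_measurable_continuous_onI[OF assms] by simp

lemma dy_valid_psi1:
  assumes "k > 0"
  shows "dy_valid psi1 a k"
  unfolding dy_valid_def dy_kernel_def psi1_def
proof (rule integrable_lborel_exp_linear_decay[where \<epsilon> = 1 and c = "(\<bar>a\<bar> + 1)\<^sup>2 / (4 * k)"])
  fix w :: real
  have "0 \<le> k * (\<bar>w\<bar> - (\<bar>a\<bar> + 1) / (2 * k))\<^sup>2"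
    using assms by simp
  also have "\<dots> = k * w\<^sup>2 - (\<bar>a\<bar> + 1) * \<bar>w\<bar> + (\<bar>a\<bar> + 1)\<^sup>2 / (4 * k)"
    using assms by (simp add: power2_eq_square field_simps)
  finally show "a * w - k * w\<^sup>2 \<le> (\<bar>a\<bar> + 1)\<^sup>2 / (4 * k) - 1 * \<bar>w\<bar>"
    using abs_ge_self[of "a * w"] by (simp add: abs_mult algebra_simps)
qed (auto intro!: continuous_imp_borel_measurable_lborel continuous_intros)

lemma dy_valid_psi2:
  assumes "a > 0"
  shows "dy_valid psi2 a 1"
  unfolding dy_valid_def dy_kernel_def psi2_def
proof (rule integrable_lborel_exp_linear_decay[where \<epsilon> = a and c = "(1 - 2 * a)\<^sup>2"])
  fix w :: real
  show "a * w - 1 * exp w \<le> (1 - 2 * a)\<^sup>2 - a * \<bar>w\<bar>"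
  proof (cases "w \<ge> 0")
    case True
    have "(1 + w / 2)\<^sup>2 \<le> (exp (w / 2))\<^sup>2"
      using True exp_ge_add_one_self[of "w / 2"] by (intro power_mono) auto
    also have "\<dots> = exp w"
      by (simp add: power2_eq_square exp_add[symmetric])
    finally show ?thesis
      using True zero_le_power2[of "w / 2 - (2 * a - 1)"] by (simp add: power2_eq_square algebra_simps)
  next
    case False
    then have "a * \<bar>w\<bar> = - (a * w)"
      by simp
    then show ?thesis
      using exp_gt_zero[of w] zero_le_power2[of "1 - 2 * a"] by linarith
  qed
qed (use assms in \<open>auto intro!: continuous_imp_borel_measurable_lborel continuous_intros\<close>)

lemma dy_valid_psi3:
  assumes "0 < a" and "a < k"
  shows "dy_valid psi3 a k"
  unfolding dy_valid_def dy_kernel_def psi3_def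
proof (rule integrable_lborel_exp_linear_decay[where \<epsilon> = "min a (k - a)" and c = 0])
  fix w :: real
  have "max 0 w \<le> ln (1 + exp w)"
    using ln_le_cancel_iff[of "exp w" "1 + exp w"] by (auto simp: add_pos_pos)
  then have "k * max 0 w \<le> k * ln (1 + exp w)"
    using assms by (intro mult_left_mono) auto
  moreover have "a * w + min a (k - a) * \<bar>w\<bar> \<le> k * max 0 w"
  proof (cases "w \<ge> 0")
    case True
    then have "min a (k - a) * w \<le> (k - a) * w"
      by (intro mult_right_mono) auto
    with True show ?thesis
      by (simp add: algebra_simps)
  next
    case False
    then have "min a (k - a) * (- w) \<le> a * (- w)"
      by (intro mult_right_mono) auto
    with False show ?thesis
      by (simp add: algebra_simps)
  qed
  ultimately show "a * w - k * ln (1 + exp w) \<le> 0 - min a (k - a) * \<bar>w\<bar>"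
    by linarith
qed (use assms in \<open>auto intro!: continuous_imp_borel_measurable_lborel continuous_intros
       simp: add_pos_pos less_imp_neq[THEN not_sym]\<close>)

text \<open>The kernel of psi4 with \<open>a = 0\<close> decays like \<open>\<bar>w\<bar> powr (-2k)\<close>, hence the condition \<open>k > 1/2\<close>.\<close>

lemma dy_valid_psi4:
  assumes "\<nu> > 0" and "k > 1 / 2"
  shows "dy_valid (psi4 \<nu>) 0 k"
  unfolding dy_valid_def
proof (rule Bochner_Integration.integrable_bound)
  define c where "c = 2 * max 1 \<nu>"
  have c: "c > 0"
    by (simp add: c_def)
  show "integrable lborel (\<lambda>w. c powr k * (1 + \<bar>w\<bar>) powr (- (2 * k)))"
    using integrable_lborel_one_plus_abs_powr[of "2 * k"] assms(2) by simp
  show "AE w in lborel. norm (dy_kernel (psi4 \<nu>) 0 k w) \<le> norm (c powr k * (1 + \<bar>w\<bar>) powr (- (2 * k)))"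
  proof (intro AE_I2)
    fix w :: real
    have pos: "0 < 1 + w\<^sup>2 / \<nu>"
      using assms(1) by (simp add: add_pos_nonneg)
    have "w\<^sup>2 \<le> max 1 \<nu> * (w\<^sup>2 / \<nu>)"
      using assms(1) mult_right_mono[of \<nu> "max 1 \<nu>" "w\<^sup>2 / \<nu>"] by simp
    moreover have "(1 + \<bar>w\<bar>)\<^sup>2 \<le> 2 * (1 + w\<^sup>2)"
      using zero_le_power2[of "\<bar>w\<bar> - 1"] by (simp add: power2_eq_square algebra_simps)
    ultimately have "(1 + \<bar>w\<bar>)\<^sup>2 \<le> c * (1 + w\<^sup>2 / \<nu>)"
      by (simp add: c_def distrib_left)
    then have "((1 + \<bar>w\<bar>)\<^sup>2) powr k \<le> (c * (1 + w\<^sup>2 / \<nu>)) powr k"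
      using assms(2) by (intro powr_mono2) auto
    moreover have "((1 + \<bar>w\<bar>)\<^sup>2) powr k = (1 + \<bar>w\<bar>) powr (2 * k)"
      using powr_powr[of "1 + \<bar>w\<bar>" 2 k] by simp
    ultimately have "(1 + \<bar>w\<bar>) powr (2 * k) \<le> c powr k * (1 + w\<^sup>2 / \<nu>) powr k"
      using c pos by (simp add: powr_mult)
    then have "(1 + w\<^sup>2 / \<nu>) powr (- k) \<le> c powr k * (1 + \<bar>w\<bar>) powr (- (2 * k))"
      using c pos by (simp add: powr_minus divide_simps mult.commute)
    moreover have "dy_kernel (psi4 \<nu>) 0 k w = (1 + w\<^sup>2 / \<nu>) powr (- k)"
      using pos by (simp add: dy_kernel_def psi4_def powr_def)
    ultimately show "norm (dy_kernel (psi4 \<nu>) 0 k w) \<le> norm (c powr k * (1 + \<bar>w\<bar>) powr (- (2 * k)))"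
      by simp
  qed
  show "dy_kernel (psi4 \<nu>) 0 k \<in> borel_measurable lborel"
    unfolding dy_kernel_def psi4_def by measurable
qed

lemma t_kernel_eq_dy_kernel:
  assumes "\<nu> > 0"
  shows "t_kernel \<nu> = dy_kernel (psi4 \<nu>) 0 ((\<nu> + 1) / 2)"
proof
  fix u
  have "0 < 1 + u\<^sup>2 / \<nu>"
    using assms by (simp add: add_pos_nonneg)
  then show "t_kernel \<nu> u = dy_kernel (psi4 \<nu>) 0 ((\<nu> + 1) / 2) u"
    by (simp add: t_kernel_def dy_kernel_def psi4_def powr_def algebra_simps)
qed

section \<open>Block vectors and block matrices\<close>

lemma zero_vec_append: "0\<^sub>v n1 @\<^sub>v 0\<^sub>v n2 = 0\<^sub>v (n1 + n2)"
  by (rule eq_vecI) auto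

lemma append_vec_assoc: "(a @\<^sub>v b) @\<^sub>v c = a @\<^sub>v (b @\<^sub>v c)"
  by (rule eq_vecI) (auto simp: add.assoc)

lemma append_vec_minus:
  fixes a a' b b' :: "'a :: group_add vec"
  assumes "a \<in> carrier_vec n1" "a' \<in> carrier_vec n1" "b \<in> carrier_vec n2" "b' \<in> carrier_vec n2"
  shows "(a @\<^sub>v b) - (a' @\<^sub>v b') = (a - a') @\<^sub>v (b - b')"
  using assms by (intro eq_vecI) auto

lemma zero_mat_mult_vec [simp]: "v \<in> carrier_vec nc \<Longrightarrow> 0\<^sub>m nr nc *\<^sub>v v = (0\<^sub>v nr :: real vec)"
  by (rule eq_vecI) (auto simp: scalar_prod_def)

lemma smult_one_mat_mult_vec [simp]: "v \<in> carrier_vec n \<Longrightarrow> (k \<cdot>\<^sub>m 1\<^sub>m n) *\<^sub>v v = (k :: real) \<cdot>\<^sub>v v"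
  by (rule eq_vecI) (auto simp: row_smult row_one smult_scalar_prod_distrib scalar_prod_left_unit)

lemma minv_inverse:
  fixes A :: "real mat"
  assumes A: "A \<in> carrier_mat n n" and det: "det A \<noteq> 0"
  shows "A * minv A = 1\<^sub>m n" "minv A * A = 1\<^sub>m n" "minv A \<in> carrier_mat n n"
proof -
  have "mat_inverse A \<noteq> None"
  proof
    assume "mat_inverse A = None"
    then show False
      using mat_inverse(1)[OF A, of "()"] det_non_zero_imp_unit[OF A det, of "()"] by blast
  qed
  then obtain B where "mat_inverse A = Some B"
    by blast
  then show "A * minv A = 1\<^sub>m n" "minv A * A = 1\<^sub>m n" "minv A \<in> carrier_mat n n"
    using mat_inverse(2)[OF A] by (auto simp: minv_def)
qed

lemma minv_eqI:
  fixes A B :: "real mat"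
  assumes A: "A \<in> carrier_mat n n" and B: "B \<in> carrier_mat n n" and AB: "A * B = 1\<^sub>m n"
  shows "minv A = B"
proof -
  have "det A \<noteq> 0"
    using det_mult[OF A B] AB by auto
  note inv = minv_inverse[OF A this]
  have "minv A = minv A * (A * B)"
    using inv(3) AB by simp
  also have "\<dots> = (minv A * A) * B"
    using A B inv(3) by (simp add: assoc_mult_mat)
  also have "\<dots> = B"
    using inv(2) B by simp
  finally show ?thesis .
qed

lemma invertible_mat_det_nonzero:
  fixes A :: "real mat"
  assumes A: "A \<in> carrier_mat n n" and "invertible_mat A"
  shows "det A \<noteq> 0"
proof -
  obtain B where AB: "A * B = 1\<^sub>m (dim_row A)" and BA: "B * A = 1\<^sub>m (dim_row B)"
    using assms(2) unfolding invertible_mat_def inverts_mat_def by blast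
  have "B \<in> carrier_mat n n"
    using A AB BA by (metis carrier_matD carrier_matI index_mult_mat(2,3) index_one_mat(2,3))
  then show ?thesis
    using det_mult[OF A] AB A by force
qed

lemma hcat_carrier [simp, intro]:
  "A \<in> carrier_mat nr n1 \<Longrightarrow> B \<in> carrier_mat nr n2 \<Longrightarrow> hcat A B \<in> carrier_mat nr (n1 + n2)"
  unfolding hcat_def by (metis add.right_neutral carrier_matD(2) four_block_carrier_mat zero_carrier_mat)

lemma hcat_mult_vec:
  assumes "A \<in> carrier_mat nr n1" "B \<in> carrier_mat nr n2" "x \<in> carrier_vec n1" "y \<in> carrier_vec n2"
  shows "hcat A B *\<^sub>v (x @\<^sub>v y) = A *\<^sub>v x + B *\<^sub>v y"
  using four_block_mat_mult_vec[OF assms(1,2) zero_carrier_mat[of 0 n1] zero_carrier_mat[of 0 n2] assms(3,4)]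
    assms by (auto simp: hcat_def intro!: eq_vecI)

lemma hcat3_mult_vec:
  fixes A B C :: "real mat"
  assumes "A \<in> carrier_mat nr n1" "B \<in> carrier_mat nr n2" "C \<in> carrier_mat nr n3"
    and "x \<in> carrier_vec n1" "y \<in> carrier_vec n2" "z \<in> carrier_vec n3"
  shows "hcat A (hcat B C) *\<^sub>v (x @\<^sub>v y @\<^sub>v z) = A *\<^sub>v x + B *\<^sub>v y + C *\<^sub>v z"
proof -
  have "hcat A (hcat B C) *\<^sub>v (x @\<^sub>v y @\<^sub>v z) = A *\<^sub>v x + (B *\<^sub>v y + C *\<^sub>v z)"
    using assms by (simp add: hcat_mult_vec[of _ nr n1 _ "n2 + n3"] hcat_mult_vec[of _ nr n2 _ n3])
  also have "\<dots> = A *\<^sub>v x + B *\<^sub>v y + C *\<^sub>v z"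
    using assms by (intro assoc_add_vec[symmetric, of _ nr]) auto
  finally show ?thesis .
qed

lemma four_block_mat_empty_blocks:
  "A \<in> carrier_mat n m \<Longrightarrow> four_block_mat A (0\<^sub>m n 0) (0\<^sub>m 0 m) (0\<^sub>m 0 0) = A"
  by (rule eq_matI) auto

lemma mult_hcat:
  fixes M A B :: "real mat"
  assumes "M \<in> carrier_mat nr n" "A \<in> carrier_mat n n1" "B \<in> carrier_mat n n2"
  shows "M * hcat A B = hcat (M * A) (M * B)"
proof -
  have "M * hcat A B = four_block_mat M (0\<^sub>m nr 0) (0\<^sub>m 0 n) (0\<^sub>m 0 0) * four_block_mat A B (0\<^sub>m 0 n1) (0\<^sub>m 0 n2)"
    using assms by (simp add: hcat_def four_block_mat_empty_blocks)
  also have "\<dots> = hcat (M * A) (M * B)"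
    using assms by (subst mult_four_block_mat[of _ nr n _ 0 _ 0 _ _ n1]) (auto simp: hcat_def)
  finally show ?thesis .
qed

lemma append_rows_mult:
  fixes A B M :: "real mat"
  assumes "A \<in> carrier_mat nr1 n" "B \<in> carrier_mat nr2 n" "M \<in> carrier_mat n nc"
  shows "(A @\<^sub>r B) * M = (A * M) @\<^sub>r (B * M)"
proof -
  have "(A @\<^sub>r B) * M = four_block_mat A (0\<^sub>m nr1 0) B (0\<^sub>m nr2 0) * four_block_mat M (0\<^sub>m n 0) (0\<^sub>m 0 nc) (0\<^sub>m 0 0)"
    using assms by (simp add: append_rows_def four_block_mat_empty_blocks)
  also have "\<dots> = (A * M) @\<^sub>r (B * M)"
    using assms by (subst mult_four_block_mat[of _ nr1 n _ 0 _ nr2 _ _ nc]) (auto simp: append_rows_def)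
  finally show ?thesis .
qed

lemma hcat_append_rows:
  assumes "A \<in> carrier_mat r1 c1" "B \<in> carrier_mat r1 c2" "C \<in> carrier_mat r2 c1" "D \<in> carrier_mat r2 c2"
  shows "hcat (A @\<^sub>r C) (B @\<^sub>r D) = four_block_mat A B C D"
  using assms by (intro eq_matI) (auto simp: hcat_def append_rows_def)

lemma block_diagonal_mult:
  fixes A B C D :: "real mat"
  assumes "A \<in> carrier_mat n1 n1" "B \<in> carrier_mat n2 n2" "C \<in> carrier_mat n1 n1" "D \<in> carrier_mat n2 n2"
  shows "four_block_mat A (0\<^sub>m n1 n2) (0\<^sub>m n2 n1) B * four_block_mat C (0\<^sub>m n1 n2) (0\<^sub>m n2 n1) D
       = four_block_mat (A * C) (0\<^sub>m n1 n2) (0\<^sub>m n2 n1) (B * D)"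
  using assms by (subst mult_four_block_mat[OF assms(1) _ _ assms(2) assms(3) _ _ assms(4)]) auto

lemma diag_block_mat_Cons_mult_vec:
  fixes A :: "real mat"
  assumes "A \<in> carrier_mat n n" "v \<in> carrier_vec n" "w \<in> carrier_vec (dim_col (diag_block_mat As))"
    and "\<forall>B\<in>set As. square_mat B"
  shows "diag_block_mat (A # As) *\<^sub>v (v @\<^sub>v w) = (A *\<^sub>v v) @\<^sub>v (diag_block_mat As *\<^sub>v w)"
proof -
  define D where "D = diag_block_mat As"
  define k where "k = dim_col D"
  have D: "D \<in> carrier_mat k k"
    using diag_block_mat_square[OF assms(4)] by (auto simp: D_def k_def square_mat.simps)
  have "diag_block_mat (A # As) = four_block_mat A (0\<^sub>m n k) (0\<^sub>m k n) D"
    using carrier_matD[OF assms(1)] carrier_matD[OF D] by (simp add: D_def[symmetric])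
  then show ?thesis
    using mult_mat_vec_split[OF assms(1) D assms(2)] assms(3) by (simp add: D_def k_def)
qed

lemma det_diag_block_mat:
  fixes As :: "real mat list"
  assumes "\<forall>A\<in>set As. square_mat A"
  shows "det (diag_block_mat As) = prod_list (map det As)"
  using assms
proof (induction As)
  case Nil
  have "0\<^sub>m 0 0 = (1\<^sub>m 0 :: real mat)"
    by (intro eq_matI) auto
  then show ?case
    by simp
next
  case (Cons A As)
  define D where "D = diag_block_mat As"
  have D: "D \<in> carrier_mat (dim_row D) (dim_row D)"
    using diag_block_mat_square[of As] Cons.prems by (auto simp: D_def square_mat.simps)
  have A: "A \<in> carrier_mat (dim_row A) (dim_row A)"
    using Cons.prems by (auto simp: square_mat.simps)
  have "det (diag_block_mat (A # As)) = det A * det D"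
    unfolding diag_block_mat.simps Let_def D_def[symmetric]
    using D A by (metis carrier_matD(2) det_four_block_mat_lower_left_zero zero_carrier_mat)
  then show ?case
    using Cons by (simp add: D_def)
qed

lemma minv_diag_block_mat:
  fixes As :: "real mat list"
  assumes "\<forall>A\<in>set As. square_mat A \<and> det A \<noteq> 0"
  shows "minv (diag_block_mat As) = diag_block_mat (map minv As)"
  using assms
proof (induction As)
  case Nil
  show ?case
    by simp (rule minv_eqI, auto)
next
  case (Cons A As)
  define n where "n = dim_row A"
  define D where "D = diag_block_mat As"
  define m where "m = dim_row D"
  have A: "A \<in> carrier_mat n n" "det A \<noteq> 0"
    using Cons.prems by (auto simp: n_def square_mat.simps)
  have D: "D \<in> carrier_mat m m" "det D \<noteq> 0"
    using diag_block_mat_square[of As] det_diag_block_mat[of As] Cons.prems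
    by (auto simp: D_def m_def square_mat.simps prod_list_zero_iff)
  note iA = minv_inverse[OF A] and iD = minv_inverse[OF D]
  have DA: "diag_block_mat (A # As) = four_block_mat A (0\<^sub>m n m) (0\<^sub>m m n) D"
    using carrier_matD[OF A(1)] carrier_matD[OF D(1)] by (simp add: D_def[symmetric])
  have DAinv: "diag_block_mat (map minv (A # As)) = four_block_mat (minv A) (0\<^sub>m n m) (0\<^sub>m m n) (minv D)"
    using Cons.IH Cons.prems carrier_matD[OF iA(3)] carrier_matD[OF iD(3)] by (simp add: D_def[symmetric])
  show ?case
    unfolding DA DAinv
    by (rule minv_eqI[where n = "n + m"])
       (use A D iA iD in \<open>auto simp: block_diagonal_mult\<close>)
qed

lemma det_gram_nonzero:
  fixes H :: "real mat"
  assumes H: "H \<in> carrier_mat m n"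
    and inj: "\<And>v. v \<in> carrier_vec n \<Longrightarrow> H *\<^sub>v v = 0\<^sub>v m \<Longrightarrow> v = 0\<^sub>v n"
  shows "det (transpose_mat H * H) \<noteq> 0"
proof
  assume "det (transpose_mat H * H) = 0"
  then obtain v where v: "v \<in> carrier_vec n" "v \<noteq> 0\<^sub>v n" "transpose_mat H * H *\<^sub>v v = 0\<^sub>v n"
    using det_0_iff_vec_prod_zero_field[of "transpose_mat H * H" n] H by auto
  have "(H *\<^sub>v v) \<bullet> (H *\<^sub>v v) = (transpose_mat H *\<^sub>v (H *\<^sub>v v)) \<bullet> v"
    using H v(1) by (intro transpose_vec_mult_scalar[symmetric]) auto
  also have "transpose_mat H *\<^sub>v (H *\<^sub>v v) = transpose_mat H * H *\<^sub>v v"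
    using H v(1) by (intro assoc_mult_mat_vec[symmetric]) auto
  also have "(transpose_mat H * H *\<^sub>v v) \<bullet> v = 0"
    using v by simp
  finally have "H *\<^sub>v v = 0\<^sub>v m"
    using conjugate_square_eq_0_vec[OF mult_mat_vec_carrier[OF H v(1)]] by simp
  then show False
    using inj v by blast
qed

lemma inverse_hcat_orthogonal_complement:
  fixes H Q :: "real mat"
  assumes H: "H \<in> carrier_mat (n + k) n" and Q: "Q \<in> carrier_mat (n + k) k"
    and gram: "det (transpose_mat H * H) \<noteq> 0"
    and QQ: "transpose_mat Q * Q = 1\<^sub>m k" and HQ: "transpose_mat H * Q = 0\<^sub>m n k"
  defines "B \<equiv> (minv (transpose_mat H * H) * transpose_mat H) @\<^sub>r transpose_mat Q"
  shows "B \<in> carrier_mat (n + k) (n + k)" "B * hcat H Q = 1\<^sub>m (n + k)" "hcat H Q * B = 1\<^sub>m (n + k)"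
proof -
  define P where "P = minv (transpose_mat H * H) * transpose_mat H"
  note iK = minv_inverse[of "transpose_mat H * H" n, OF _ gram]
  have P: "P \<in> carrier_mat n (n + k)"
    using iK(3) H by (simp add: P_def)
  show B: "B \<in> carrier_mat (n + k) (n + k)"
    using P Q by (auto simp: B_def P_def[symmetric])
  have PH: "P * H = 1\<^sub>m n"
    using iK H by (simp add: P_def assoc_mult_mat[of _ n n _ "n + k" _ n])
  have PQ: "P * Q = 0\<^sub>m n k"
    using iK H Q HQ by (simp add: P_def assoc_mult_mat[of _ n n _ "n + k" _ k])
  have QH: "transpose_mat Q * H = 0\<^sub>m k n"
    using transpose_mult[of "transpose_mat H" n "n + k" Q k] H Q HQ by simp
  have "B * hcat H Q = hcat (B * H) (B * Q)"
    using B H Q by (rule mult_hcat)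
  also have "\<dots> = hcat ((P * H) @\<^sub>r (transpose_mat Q * H)) ((P * Q) @\<^sub>r (transpose_mat Q * Q))"
    using P H Q by (simp add: B_def P_def[symmetric] append_rows_mult)
  also have "\<dots> = four_block_mat (P * H) (P * Q) (transpose_mat Q * H) (transpose_mat Q * Q)"
    using P H Q by (intro hcat_append_rows) auto
  also have "\<dots> = 1\<^sub>m (n + k)"
    unfolding PH PQ QH QQ by (rule four_block_one_mat)
  finally show BW: "B * hcat H Q = 1\<^sub>m (n + k)" .
  show "hcat H Q * B = 1\<^sub>m (n + k)"
    by (rule mat_mult_left_right_inverse[OF B hcat_carrier[OF H Q] BW])
qed

section \<open>The design matrices of the model\<close>

lemma H_mat_carrier:
  assumes "X \<in> carrier_mat N p" "G \<in> carrier_mat N r"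
  shows "H_mat N p r X G \<in> carrier_mat (N + p + r + N) (N + p + r)"
proof -
  have "H_mat N p r X G \<in> carrier_mat (N + (p + (r + N))) (N + (p + r))"
    unfolding H_mat_def using assms by (intro carrier_append_rows hcat_carrier) auto
  then show ?thesis
    by (simp add: add.assoc)
qed

lemma H_mat_mult_vec:
  assumes X: "X \<in> carrier_mat N p" and G: "G \<in> carrier_mat N r"
    and v: "xi \<in> carrier_vec N" "beta \<in> carrier_vec p" "eta \<in> carrier_vec r"
  shows "H_mat N p r X G *\<^sub>v (xi @\<^sub>v beta @\<^sub>v eta) = (xi + X *\<^sub>v beta + G *\<^sub>v eta) @\<^sub>v beta @\<^sub>v eta @\<^sub>v xi"
proof -
  let ?v = "xi @\<^sub>v beta @\<^sub>v eta"
  define R1 where "R1 = hcat (1\<^sub>m N) (hcat X G)"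
  define R2 where "R2 = hcat (0\<^sub>m p N) (hcat (1\<^sub>m p) (0\<^sub>m p r))"
  define R3 where "R3 = hcat (0\<^sub>m r N) (hcat (0\<^sub>m r p) (1\<^sub>m r))"
  define R4 where "R4 = hcat (1\<^sub>m N) (hcat (0\<^sub>m N p) (0\<^sub>m N r))"
  have R: "R1 \<in> carrier_mat N (N + (p + r))" "R2 \<in> carrier_mat p (N + (p + r))"
    "R3 \<in> carrier_mat r (N + (p + r))" "R4 \<in> carrier_mat N (N + (p + r))"
    using X G by (auto simp: R1_def R2_def R3_def R4_def)
  have vc: "?v \<in> carrier_vec (N + (p + r))"
    using v by auto
  have "H_mat N p r X G *\<^sub>v ?v = (R1 *\<^sub>v ?v) @\<^sub>v ((R2 @\<^sub>r R3 @\<^sub>r R4) *\<^sub>v ?v)"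
    unfolding H_mat_def R1_def[symmetric] R2_def[symmetric] R3_def[symmetric] R4_def[symmetric]
    by (rule mat_mult_append) (use R vc in auto)
  also have "(R2 @\<^sub>r R3 @\<^sub>r R4) *\<^sub>v ?v = (R2 *\<^sub>v ?v) @\<^sub>v ((R3 @\<^sub>r R4) *\<^sub>v ?v)"
    by (rule mat_mult_append) (use R vc in auto)
  also have "(R3 @\<^sub>r R4) *\<^sub>v ?v = (R3 *\<^sub>v ?v) @\<^sub>v (R4 *\<^sub>v ?v)"
    by (rule mat_mult_append) (use R vc in auto)
  also have "R1 *\<^sub>v ?v = xi + X *\<^sub>v beta + G *\<^sub>v eta"
    using X G v by (simp add: R1_def hcat3_mult_vec[of _ N N _ p _ r])
  also have "R2 *\<^sub>v ?v = beta"
    using v by (simp add: R2_def hcat3_mult_vec[of _ p N _ p _ r])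
  also have "R3 *\<^sub>v ?v = eta"
    using v by (simp add: R3_def hcat3_mult_vec[of _ r N _ p _ r])
  also have "R4 *\<^sub>v ?v = xi"
    using v by (simp add: R4_def hcat3_mult_vec[of _ N N _ p _ r])
  finally show ?thesis .
qed

lemma A_mat_mult_vec:
  assumes X: "X \<in> carrier_mat N p" and G: "G \<in> carrier_mat N r"
    and v: "xi \<in> carrier_vec N" "beta \<in> carrier_vec p" "eta \<in> carrier_vec r"
  shows "A_mat N p r X G s *\<^sub>v (xi @\<^sub>v beta @\<^sub>v eta) = (xi + X *\<^sub>v beta + G *\<^sub>v eta) @\<^sub>v ((1 / s) \<cdot>\<^sub>v xi)"
proof -
  have vc: "xi @\<^sub>v beta @\<^sub>v eta \<in> carrier_vec (N + (p + r))"
    using v by auto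
  have "A_mat N p r X G s *\<^sub>v (xi @\<^sub>v beta @\<^sub>v eta)
      = (hcat (1\<^sub>m N) (hcat X G) *\<^sub>v (xi @\<^sub>v beta @\<^sub>v eta))
        @\<^sub>v (hcat ((1 / s) \<cdot>\<^sub>m 1\<^sub>m N) (hcat (0\<^sub>m N p) (0\<^sub>m N r)) *\<^sub>v (xi @\<^sub>v beta @\<^sub>v eta))"
    unfolding A_mat_def by (rule mat_mult_append[of _ N "N + (p + r)" _ N]) (use X G vc in auto)
  then show ?thesis
    using X G v by (simp add: hcat3_mult_vec[of _ N N _ p _ r])
qed

lemma det_gram_H_mat_nonzero:
  assumes X: "X \<in> carrier_mat N p" and G: "G \<in> carrier_mat N r"
  shows "det (transpose_mat (H_mat N p r X G) * H_mat N p r X G) \<noteq> 0"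
proof (rule det_gram_nonzero[OF H_mat_carrier[OF X G]])
  fix v :: "real vec"
  assume v: "v \<in> carrier_vec (N + p + r)" and Hv: "H_mat N p r X G *\<^sub>v v = 0\<^sub>v (N + p + r + N)"
  define xi beta eta where "xi = vec_first v N" and "beta = vec_first (vec_last v (p + r)) p"
    and "eta = vec_last (vec_last v (p + r)) r"
  have parts: "xi \<in> carrier_vec N" "beta \<in> carrier_vec p" "eta \<in> carrier_vec r"
    by (simp_all add: xi_def beta_def eta_def)
  have split: "v = xi @\<^sub>v beta @\<^sub>v eta"
    using v by (simp add: xi_def beta_def eta_def add.assoc)
  have "(xi + X *\<^sub>v beta + G *\<^sub>v eta) @\<^sub>v beta @\<^sub>v eta @\<^sub>v xi = 0\<^sub>v N @\<^sub>v 0\<^sub>v p @\<^sub>v 0\<^sub>v r @\<^sub>v 0\<^sub>v N"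
    using Hv H_mat_mult_vec[OF X G parts] unfolding split by (simp add: zero_vec_append add.assoc)
  moreover have "xi + X *\<^sub>v beta + G *\<^sub>v eta \<in> carrier_vec N"
    using X G parts by auto
  ultimately have "beta @\<^sub>v eta @\<^sub>v xi = 0\<^sub>v p @\<^sub>v 0\<^sub>v r @\<^sub>v 0\<^sub>v N"
    using append_vec_eq[OF _ zero_carrier_vec] by blast
  then have "beta = 0\<^sub>v p" "eta @\<^sub>v xi = 0\<^sub>v r @\<^sub>v 0\<^sub>v N"
    using append_vec_eq[OF parts(2) zero_carrier_vec] by blast+
  moreover from this(2) have "eta = 0\<^sub>v r" "xi = 0\<^sub>v N"
    using append_vec_eq[OF parts(3) zero_carrier_vec] by blast+
  ultimately show "v = 0\<^sub>v (N + p + r)"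
    unfolding split by (simp add: zero_vec_append add.assoc)
qed

lemma det_D_mat:
  assumes "Db \<in> carrier_mat p p" "De \<in> carrier_mat r r"
  shows "det (D_mat N Db De s) = det Db * det De * s ^ N"
  using assms by (simp add: D_mat_def det_diag_block_mat square_mat.simps del: diag_block_mat.simps)

lemma minv_D_mat_mult_vec:
  fixes Db De :: "real mat"
  assumes Db: "Db \<in> carrier_mat p p" "det Db \<noteq> 0" and De: "De \<in> carrier_mat r r" "det De \<noteq> 0"
    and s: "s \<noteq> 0"
    and v: "v1 \<in> carrier_vec N" "v2 \<in> carrier_vec p" "v3 \<in> carrier_vec r" "v4 \<in> carrier_vec N"
  shows "minv (D_mat N Db De s) *\<^sub>v (v1 @\<^sub>v v2 @\<^sub>v v3 @\<^sub>v v4)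
    = v1 @\<^sub>v (minv Db *\<^sub>v v2) @\<^sub>v (minv De *\<^sub>v v3) @\<^sub>v ((1 / s) \<cdot>\<^sub>v v4)"
proof -
  have "minv (1\<^sub>m N) = 1\<^sub>m N"
    by (rule minv_eqI) auto
  moreover have "minv (s \<cdot>\<^sub>m 1\<^sub>m N) = (1 / s) \<cdot>\<^sub>m 1\<^sub>m N"
    using s by (intro minv_eqI) (auto intro!: eq_matI)
  ultimately have "minv (D_mat N Db De s) = diag_block_mat [1\<^sub>m N, minv Db, minv De, (1 / s) \<cdot>\<^sub>m 1\<^sub>m N]"
    unfolding D_mat_def using Db De s
    by (subst minv_diag_block_mat) (auto simp: square_mat.simps simp del: diag_block_mat.simps)
  moreover have "diag_block_mat [1\<^sub>m N, minv Db, minv De, (1 / s) \<cdot>\<^sub>m 1\<^sub>m N] *\<^sub>v (v1 @\<^sub>v v2 @\<^sub>v v3 @\<^sub>v v4)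
      = v1 @\<^sub>v (minv Db *\<^sub>v v2) @\<^sub>v (minv De *\<^sub>v v3) @\<^sub>v ((1 / s) \<cdot>\<^sub>v v4)"
    using minv_inverse(3)[OF Db] minv_inverse(3)[OF De] v
    by (simp add: diag_block_mat_Cons_mult_vec[of _ N] diag_block_mat_Cons_mult_vec[of _ p]
        diag_block_mat_Cons_mult_vec[of _ r] dim_diag_block_mat square_mat.simps
        del: diag_block_mat.simps)
  ultimately show ?thesis
    by simp
qed

section \<open>DY exponents and exponential-family forms of the likelihood\<close>

definition dy_exponent :: "real vec \<Rightarrow> real vec \<Rightarrow> (nat \<Rightarrow> real \<Rightarrow> real) \<Rightarrow> real vec \<Rightarrow> real" where
  "dy_exponent a k psis w = a \<bullet> w - k \<bullet> psi_vec psis w"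

lemma dy_exponent_eq_sum:
  assumes "dim_vec a = dim_vec w" "dim_vec k = dim_vec w"
  shows "dy_exponent a k psis w = (\<Sum>l<dim_vec w. a $ l * w $ l - k $ l * psis l (w $ l))"
  using assms by (simp add: dy_exponent_def psi_vec_def scalar_prod_def atLeast0LessThan sum_subtractf)

lemma dy_prior_factor_eq:
  "dy_prior_factor Dm mu a k psis x = exp (dy_exponent a k psis (minv Dm *\<^sub>v (x - mu))) / \<bar>det Dm\<bar>"
  by (simp add: dy_prior_factor_def dy_exponent_def Let_def)

lemma sum_lessThan_add:
  fixes g :: "nat \<Rightarrow> 'a :: comm_monoid_add"
  shows "(\<Sum>i<a + b. g i) = (\<Sum>i<a. g i) + (\<Sum>i<b. g (a + i))"
  by (induct b) (simp_all add: add.assoc)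

lemma prod_lessThan_add:
  fixes g :: "nat \<Rightarrow> 'a :: comm_monoid_mult"
  shows "(\<Prod>i<a + b. g i) = (\<Prod>i<a. g i) * (\<Prod>i<b. g (a + i))"
  by (induct b) (simp_all add: mult.assoc)

lemma prod_mult_exp_sum:
  fixes f c e :: "nat \<Rightarrow> real"
  assumes "\<And>i. i < n \<Longrightarrow> f i = c i * exp (e i)"
  shows "(\<Prod>i<n. f i) = (\<Prod>i<n. c i) * exp (\<Sum>i<n. e i)"
proof -
  have "(\<Prod>i<n. f i) = (\<Prod>i<n. c i * exp (e i))"
    using assms by (intro prod.cong) auto
  then show ?thesis
    by (simp add: prod.distrib exp_sum)
qed

lemma normal_pdf_exp_family:
  assumes "v > 0"
  shows "normal_pdf Y v z = exp (- z\<^sup>2 / (2 * v)) / sqrt (2 * pi * v) * exp (z / v * Y - 1 / (2 * v) * psi1 Y)"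
proof -
  have eq: "- (z - Y)\<^sup>2 / (2 * v) = - z\<^sup>2 / (2 * v) + (z / v * Y - 1 / (2 * v) * psi1 Y)"
    using assms by (simp add: psi1_def field_simps power2_eq_square)
  show ?thesis
    unfolding normal_pdf_def eq exp_add by simp
qed

lemma poisson_pmf_exp_family:
  "poisson_pmf (exp Y) k = 1 / fact k * exp (real k * Y - psi2 Y)"
  by (simp add: poisson_pmf_def psi2_def exp_diff exp_minus exp_of_nat_mult[symmetric] field_simps)

lemma binomial_pmf_exp_family:
  assumes "k \<le> m"
  shows "binomial_pmf_real m (exp Y / (1 + exp Y)) k = real (m choose k) * exp (real k * Y - real m * psi3 Y)"
proof -
  define d where "d = 1 + exp Y"
  have d: "d > 0"
    by (simp add: d_def add_pos_pos)
  have "(exp Y / d) ^ k * (1 - exp Y / d) ^ (m - k) = exp Y ^ k / d ^ m"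
    using d assms by (simp add: d_def field_simps power_add[symmetric])
  also have "\<dots> = exp (real k * Y - real m * psi3 Y)"
    using d by (simp add: psi3_def d_def[symmetric] exp_diff exp_of_nat_mult)
  finally show ?thesis
    by (simp add: binomial_pmf_real_def d_def mult.assoc)
qed

lemma t_pdf_exp_family:
  assumes "\<nu> > 0"
  shows "t_pdf \<nu> Y z = 1 / (\<integral>u. t_kernel \<nu> u \<partial>lborel) * exp (- ((\<nu> + 1) / 2) * psi4 \<nu> (Y - z))"
  using assms by (simp add: t_pdf_def t_kernel_eq_dy_kernel dy_kernel_def psi4_def power2_commute)

section \<open>The posterior as a generalized conjugate multivariate density\<close>

locale orthogonal_design =
  fixes N p r :: nat and X G Q :: "real mat"
  assumes X: "X \<in> carrier_mat N p" and G: "G \<in> carrier_mat N r"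
    and Q: "Q \<in> carrier_mat (2 * N + p + r) N"
    and Q_orthonormal: "transpose_mat Q * Q = 1\<^sub>m N"
    and H_orthogonal_Q: "transpose_mat (H_mat N p r X G) * Q = 0\<^sub>m (N + p + r) N"
begin

abbreviation H :: "real mat" where
  "H \<equiv> H_mat N p r X G"

definition V_M :: "real mat" where
  "V_M = (minv (transpose_mat H * H) * transpose_mat H) @\<^sub>r transpose_mat Q"

lemma V_M_inverse:
  shows V_M_carrier: "V_M \<in> carrier_mat (2 * N + p + r) (2 * N + p + r)"
    and V_M_mult_hcat: "V_M * hcat H Q = 1\<^sub>m (2 * N + p + r)"
    and hcat_mult_V_M: "hcat H Q * V_M = 1\<^sub>m (2 * N + p + r)"
proof -
  have dim: "2 * N + p + r = N + p + r + N"
    by simp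
  note inv = inverse_hcat_orthogonal_complement[OF H_mat_carrier[OF X G] Q[unfolded dim]
      det_gram_H_mat_nonzero[OF X G] Q_orthonormal H_orthogonal_Q]
  show "V_M \<in> carrier_mat (2 * N + p + r) (2 * N + p + r)"
    "V_M * hcat H Q = 1\<^sub>m (2 * N + p + r)" "hcat H Q * V_M = 1\<^sub>m (2 * N + p + r)"
    using inv unfolding dim V_M_def by blast+
qed

lemma hcat_H_Q_carrier: "hcat H Q \<in> carrier_mat (2 * N + p + r) (2 * N + p + r)"
proof -
  have dim: "2 * N + p + r = N + p + r + N"
    by simp
  show ?thesis
    using hcat_carrier[OF H_mat_carrier[OF X G] Q[unfolded dim]] unfolding dim .
qed

lemma minv_hcat_H_Q: "minv (hcat H Q) = V_M"
  using hcat_H_Q_carrier V_M_carrier hcat_mult_V_M by (rule minv_eqI)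

lemma minv_V_M: "minv V_M = hcat H Q"
  using V_M_carrier hcat_H_Q_carrier V_M_mult_hcat by (rule minv_eqI)

lemma det_V_M_nonzero: "det V_M \<noteq> 0"
  using det_mult[OF V_M_carrier hcat_H_Q_carrier] V_M_mult_hcat by auto

lemma minv_V_M_mult_minus:
  assumes z: "z \<in> carrier_vec (2 * N + p + r)" and c: "c \<in> carrier_vec (2 * N + p + r)"
  shows "minv V_M *\<^sub>v (z - V_M *\<^sub>v c) = hcat H Q *\<^sub>v z - c"
proof -
  have "hcat H Q *\<^sub>v (V_M *\<^sub>v c) = c"
    using assoc_mult_mat_vec[OF hcat_H_Q_carrier V_M_carrier c] hcat_mult_V_M c by simp
  then show ?thesis
    unfolding minv_V_M
    using mult_minus_distrib_mat_vec[OF hcat_H_Q_carrier z mult_mat_vec_carrier[OF V_M_carrier c]] by simp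
qed

end

locale glmm_posterior = orthogonal_design N p r X G Q
  for N p r :: nat and X G Q :: "real mat" +
  fixes n1 n2 n3 n4 :: nat
    and z1 z4 sigma2 :: "real vec" and z2 z3 m :: "nat vec"
    and \<nu> s2xi alpha_xi :: real
    and alpha_b kappa_b alpha_e kappa_e :: "real vec"
    and psib psie :: "nat \<Rightarrow> real \<Rightarrow> real"
    and M :: "'t measure" and prior :: "'t \<Rightarrow> real"
    and Db De :: "'t \<Rightarrow> real mat"
  assumes N_eq: "N = n1 + n2 + n3 + n4"
    and z1: "z1 \<in> carrier_vec n1" and z2: "z2 \<in> carrier_vec n2"
    and z3: "z3 \<in> carrier_vec n3" and z4: "z4 \<in> carrier_vec n4"
    and sigma2: "sigma2 \<in> carrier_vec n1" "\<forall>i<n1. sigma2 $ i > 0"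
    and m: "m \<in> carrier_vec n3" "\<forall>i<n3. z3 $ i \<le> m $ i"
    and nu: "\<nu> > 0" and s2xi: "s2xi > 0" and alpha_xi: "alpha_xi > 0"
    and ab: "alpha_b \<in> carrier_vec p" "kappa_b \<in> carrier_vec p"
    and ae: "alpha_e \<in> carrier_vec r" "kappa_e \<in> carrier_vec r"
    and psib: "\<forall>j<p. dy_valid (psib j) (alpha_b $ j) (kappa_b $ j)"
    and psie: "\<forall>j<r. dy_valid (psie j) (alpha_e $ j) (kappa_e $ j)"
    and Db: "\<forall>\<theta>\<in>space M. Db \<theta> \<in> carrier_mat p p \<and> invertible_mat (Db \<theta>)"
    and De: "\<forall>\<theta>\<in>space M. De \<theta> \<in> carrier_mat r r \<and> invertible_mat (De \<theta>)"
begin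

abbreviation psiM :: "nat \<Rightarrow> real \<Rightarrow> real" where
  "psiM \<equiv> psi_M n1 n2 n3 N p r \<nu> psib psie"

abbreviation D :: "'t \<Rightarrow> real mat" where
  "D \<theta> \<equiv> D_mat N (Db \<theta>) (De \<theta>) s2xi"

definition alpha_M :: "real vec" where
  "alpha_M = vec n1 (\<lambda>i. z1 $ i / sigma2 $ i)
     @\<^sub>v vec n2 (\<lambda>i. real (z2 $ i) + alpha_xi)
     @\<^sub>v vec n3 (\<lambda>i. real (z3 $ i) + alpha_xi)
     @\<^sub>v 0\<^sub>v n4 @\<^sub>v alpha_b @\<^sub>v alpha_e @\<^sub>v 0\<^sub>v N"

definition kappa_M :: "real vec" where
  "kappa_M = vec n1 (\<lambda>i. 1 / (2 * sigma2 $ i))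
     @\<^sub>v vec n2 (\<lambda>_. 1)
     @\<^sub>v vec n3 (\<lambda>i. real (m $ i) + 2 * alpha_xi)
     @\<^sub>v vec n4 (\<lambda>_. (\<nu> + 1) / 2)
     @\<^sub>v kappa_b @\<^sub>v kappa_e @\<^sub>v vec N (\<lambda>_. 1 / 2)"

definition c_lik :: "real vec" where
  "c_lik = 0\<^sub>v (n1 + n2 + n3) @\<^sub>v z4"

definition c_M :: "real vec" where
  "c_M = 0\<^sub>v (n1 + n2 + n3) @\<^sub>v z4 @\<^sub>v 0\<^sub>v (N + p + r)"

definition a_xi :: "real vec" where
  "a_xi = 0\<^sub>v n1 @\<^sub>v vec n2 (\<lambda>_. alpha_xi) @\<^sub>v vec n3 (\<lambda>_. alpha_xi) @\<^sub>v 0\<^sub>v (n4 + N)"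

definition k_xi :: "real vec" where
  "k_xi = 0\<^sub>v (n1 + n2) @\<^sub>v vec n3 (\<lambda>_. 2 * alpha_xi) @\<^sub>v 0\<^sub>v n4 @\<^sub>v vec N (\<lambda>_. 1 / 2)"

text \<open>The unnormalized posterior exactly as it is written in the statement of the theorem.\<close>

definition posterior :: "real vec \<Rightarrow> real vec \<Rightarrow> real vec \<Rightarrow> real vec \<Rightarrow> real" where
  "posterior xi beta eta q =
    (let Qq = Q *\<^sub>v q;
         mu_D = - vec N (\<lambda>i. Qq $ i);
         mu_xi = - ((1 / s2xi) \<cdot>\<^sub>v vec N (\<lambda>i. Qq $ (N + p + r + i)));
         mu_b = - vec p (\<lambda>i. Qq $ (N + i));
         mu_e = - vec r (\<lambda>i. Qq $ (N + p + i));
         zeta = xi @\<^sub>v beta @\<^sub>v eta;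
         y = X *\<^sub>v beta + G *\<^sub>v eta + xi - mu_D;
         a_xi = 0\<^sub>v n1 @\<^sub>v vec n2 (\<lambda>_. alpha_xi) @\<^sub>v vec n3 (\<lambda>_. alpha_xi)
                @\<^sub>v 0\<^sub>v (n4 + N);
         k_xi = 0\<^sub>v (n1 + n2) @\<^sub>v vec n3 (\<lambda>_. 2 * alpha_xi) @\<^sub>v 0\<^sub>v n4
                @\<^sub>v vec N (\<lambda>_. 1 / 2);
         u = A_mat N p r X G s2xi *\<^sub>v zeta - (mu_D @\<^sub>v mu_xi);
         xi_factor = exp (scalar_prod a_xi u
                          - scalar_prod k_xi (psi_vec (psi_xi n1 n2 n3 N \<nu>) u))
     in \<integral>\<theta>. prior \<theta> * likelihood n1 n2 n3 n4 z1 z2 z3 z4 sigma2 m \<nu> y * xi_factor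
             * dy_prior_factor (Db \<theta>) mu_b alpha_b kappa_b psib beta
             * dy_prior_factor (De \<theta>) mu_e alpha_e kappa_e psie eta * 1 \<partial>M)"

definition likelihood_exponent :: "real vec \<Rightarrow> real" where
  "likelihood_exponent y =
     (\<Sum>i<n1. z1 $ i / sigma2 $ i * y $ i - 1 / (2 * sigma2 $ i) * psi1 (y $ i))
   + (\<Sum>i<n2. real (z2 $ i) * y $ (n1 + i) - psi2 (y $ (n1 + i)))
   + (\<Sum>i<n3. real (z3 $ i) * y $ (n1 + n2 + i) - real (m $ i) * psi3 (y $ (n1 + n2 + i)))
   + (\<Sum>i<n4. - ((\<nu> + 1) / 2) * psi4 \<nu> (y $ (n1 + n2 + n3 + i) - z4 $ i))"

definition likelihood_const :: real where
  "likelihood_const =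
     (\<Prod>i<n1. exp (- (z1 $ i)\<^sup>2 / (2 * sigma2 $ i)) / sqrt (2 * pi * sigma2 $ i))
   * (\<Prod>i<n2. 1 / fact (z2 $ i)) * (\<Prod>i<n3. real (m $ i choose z3 $ i))
   * dy_norm (psi4 \<nu>) 0 ((\<nu> + 1) / 2) ^ n4"

definition gcm_normalizer :: real where
  "gcm_normalizer = (\<Prod>l<dim_vec alpha_M. dy_norm (psiM l) (alpha_M $ l) (kappa_M $ l))"

definition posterior_const :: real where
  "posterior_const = likelihood_const * s2xi ^ N * \<bar>det V_M\<bar> / gcm_normalizer"

lemma likelihood_exp_family:
  "likelihood n1 n2 n3 n4 z1 z2 z3 z4 sigma2 m \<nu> y = likelihood_const * exp (likelihood_exponent y)"
proof -
  have "1 / (\<integral>u. t_kernel \<nu> u \<partial>lborel) = dy_norm (psi4 \<nu>) 0 ((\<nu> + 1) / 2)"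
    by (simp add: dy_norm_def t_kernel_eq_dy_kernel[OF nu])
  then have t: "(\<Prod>i<n4. t_pdf \<nu> (y $ (n1 + n2 + n3 + i)) (z4 $ i))
      = dy_norm (psi4 \<nu>) 0 ((\<nu> + 1) / 2) ^ n4
        * exp (\<Sum>i<n4. - ((\<nu> + 1) / 2) * psi4 \<nu> (y $ (n1 + n2 + n3 + i) - z4 $ i))"
    by (subst prod_mult_exp_sum) (auto simp: t_pdf_exp_family[OF nu])
  have n: "(\<Prod>i<n1. normal_pdf (y $ i) (sigma2 $ i) (z1 $ i))
      = (\<Prod>i<n1. exp (- (z1 $ i)\<^sup>2 / (2 * sigma2 $ i)) / sqrt (2 * pi * sigma2 $ i))
        * exp (\<Sum>i<n1. z1 $ i / sigma2 $ i * y $ i - 1 / (2 * sigma2 $ i) * psi1 (y $ i))"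
    by (rule prod_mult_exp_sum) (use sigma2(2) normal_pdf_exp_family in auto)
  have p: "(\<Prod>i<n2. poisson_pmf (exp (y $ (n1 + i))) (z2 $ i))
      = (\<Prod>i<n2. 1 / fact (z2 $ i)) * exp (\<Sum>i<n2. real (z2 $ i) * y $ (n1 + i) - psi2 (y $ (n1 + i)))"
    by (rule prod_mult_exp_sum) (rule poisson_pmf_exp_family)
  have b: "(\<Prod>i<n3. binomial_pmf_real (m $ i)
        (exp (y $ (n1 + n2 + i)) / (1 + exp (y $ (n1 + n2 + i)))) (z3 $ i))
      = (\<Prod>i<n3. real (m $ i choose z3 $ i))
        * exp (\<Sum>i<n3. real (z3 $ i) * y $ (n1 + n2 + i) - real (m $ i) * psi3 (y $ (n1 + n2 + i)))"
    by (rule prod_mult_exp_sum) (use m(2) binomial_pmf_exp_family in auto)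
  show ?thesis
    unfolding likelihood_def n p b t likelihood_const_def likelihood_exponent_def
    by (simp add: exp_add mult_ac)
qed

lemma likelihood_const_pos: "likelihood_const > 0"
  using sigma2(2) m(2) dy_norm_pos[OF dy_valid_psi4[OF nu]] nu
  unfolding likelihood_const_def by (auto intro!: prod_pos mult_pos_pos simp: zero_less_binomial_iff)

lemma dim_alpha_M: "dim_vec alpha_M = n1 + n2 + n3 + n4 + p + r + N"
  using ab ae by (simp add: alpha_M_def)

lemma gcm_normalizer_pos: "gcm_normalizer > 0"
proof -
  have dims: "dim_vec alpha_b = p" "dim_vec kappa_b = p" "dim_vec alpha_e = r" "dim_vec kappa_e = r"
    using ab ae by auto
  have "dy_valid (psiM i) (alpha_M $ i) (kappa_M $ i)" if "i < n1" for i
    unfolding alpha_M_def kappa_M_def using that sigma2(2) by (simp add: psi_M_def dy_valid_psi1)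
  moreover have "dy_valid (psiM (n1 + i)) (alpha_M $ (n1 + i)) (kappa_M $ (n1 + i))" if "i < n2" for i
    unfolding alpha_M_def kappa_M_def using that alpha_xi by (simp add: psi_M_def dy_valid_psi2)
  moreover have "dy_valid (psiM (n1 + n2 + i)) (alpha_M $ (n1 + n2 + i)) (kappa_M $ (n1 + n2 + i))"
    if "i < n3" for i
  proof -
    have "real (z3 $ i) \<le> real (m $ i)"
      using that m(2) by simp
    then have "real (z3 $ i) + alpha_xi < real (m $ i) + 2 * alpha_xi"
      using alpha_xi by linarith
    then show ?thesis
      unfolding alpha_M_def kappa_M_def using that alpha_xi by (simp add: psi_M_def dy_valid_psi3)
  qed
  moreover have "dy_valid (psiM (n1 + n2 + n3 + i)) (alpha_M $ (n1 + n2 + n3 + i))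
      (kappa_M $ (n1 + n2 + n3 + i))" if "i < n4" for i
    unfolding alpha_M_def kappa_M_def using that N_eq nu by (simp add: psi_M_def dy_valid_psi4)
  moreover have "dy_valid (psiM (N + i)) (alpha_M $ (N + i)) (kappa_M $ (N + i))" if "i < p" for i
    unfolding alpha_M_def kappa_M_def using that N_eq psib dims by (simp add: psi_M_def)
  moreover have "dy_valid (psiM (N + p + i)) (alpha_M $ (N + p + i)) (kappa_M $ (N + p + i))"
    if "i < r" for i
    unfolding alpha_M_def kappa_M_def using that N_eq psie dims by (simp add: psi_M_def)
  moreover have "dy_valid (psiM (N + p + r + i)) (alpha_M $ (N + p + r + i)) (kappa_M $ (N + p + r + i))"
    if "i < N" for i
    unfolding alpha_M_def kappa_M_def using that N_eq dims by (simp add: psi_M_def dy_valid_psi1)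
  ultimately show ?thesis
    unfolding gcm_normalizer_def dim_alpha_M prod_lessThan_add unfolding N_eq[symmetric]
    by (intro mult_pos_pos prod_pos dy_norm_pos) auto
qed

lemma posterior_const_pos: "posterior_const > 0"
  using gcm_normalizer_pos likelihood_const_pos s2xi det_V_M_nonzero by (simp add: posterior_const_def)

lemma xi_prior_exponent_eq:
  assumes y: "y \<in> carrier_vec N" and wx: "wx \<in> carrier_vec N"
  shows "dy_exponent a_xi k_xi (psi_xi n1 n2 n3 N \<nu>) (y @\<^sub>v wx)
    = (\<Sum>i<n2. alpha_xi * y $ (n1 + i))
      + (\<Sum>i<n3. alpha_xi * y $ (n1 + n2 + i) - 2 * alpha_xi * psi3 (y $ (n1 + n2 + i)))
      + (\<Sum>i<N. - psi1 (wx $ i) / 2)"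
proof -
  define h where "h l = a_xi $ l * (y @\<^sub>v wx) $ l - k_xi $ l * psi_xi n1 n2 n3 N \<nu> l ((y @\<^sub>v wx) $ l)"
    for l
  have dims: "dim_vec y = n1 + n2 + n3 + n4" "dim_vec wx = n1 + n2 + n3 + n4"
    using y wx N_eq by auto
  have dim_yw: "dim_vec (y @\<^sub>v wx) = n1 + n2 + n3 + n4 + N"
    using dims N_eq by simp
  have "dy_exponent a_xi k_xi (psi_xi n1 n2 n3 N \<nu>) (y @\<^sub>v wx) = (\<Sum>l<dim_vec (y @\<^sub>v wx). h l)"
    unfolding h_def a_xi_def k_xi_def by (rule dy_exponent_eq_sum) (simp_all add: dims N_eq)
  also have "\<dots> = (\<Sum>i<n1. h i) + (\<Sum>i<n2. h (n1 + i)) + (\<Sum>i<n3. h (n1 + n2 + i))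
      + (\<Sum>i<n4. h (n1 + n2 + n3 + i)) + (\<Sum>i<N. h (n1 + n2 + n3 + n4 + i))"
    unfolding dim_yw sum_lessThan_add ..
  also have "\<dots> = (\<Sum>i<n2. alpha_xi * y $ (n1 + i))
      + (\<Sum>i<n3. alpha_xi * y $ (n1 + n2 + i) - 2 * alpha_xi * psi3 (y $ (n1 + n2 + i)))
      + (\<Sum>i<N. - psi1 (wx $ i) / 2)"
    unfolding h_def a_xi_def k_xi_def using dims N_eq by (simp add: psi_xi_def)
  finally show ?thesis .
qed

lemma gcm_exponent_split:
  assumes y: "y \<in> carrier_vec N" and wb: "wb \<in> carrier_vec p" and we: "we \<in> carrier_vec r"
    and wx: "wx \<in> carrier_vec N"
  shows "dy_exponent alpha_M kappa_M psiM ((y - c_lik) @\<^sub>v wb @\<^sub>v we @\<^sub>v wx)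
    = likelihood_exponent y + dy_exponent a_xi k_xi (psi_xi n1 n2 n3 N \<nu>) (y @\<^sub>v wx)
      + dy_exponent alpha_b kappa_b psib wb + dy_exponent alpha_e kappa_e psie we"
proof -
  define w where "w = (y - c_lik) @\<^sub>v wb @\<^sub>v we @\<^sub>v wx"
  define g where "g l = alpha_M $ l * w $ l - kappa_M $ l * psiM l (w $ l)" for l
  have dims: "dim_vec z1 = n1" "dim_vec sigma2 = n1" "dim_vec z2 = n2" "dim_vec z3 = n3"
    "dim_vec m = n3" "dim_vec z4 = n4" "dim_vec alpha_b = p" "dim_vec kappa_b = p"
    "dim_vec alpha_e = r" "dim_vec kappa_e = r" "dim_vec y = n1 + n2 + n3 + n4" "dim_vec wb = p"
    "dim_vec we = r" "dim_vec wx = n1 + n2 + n3 + n4"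
    using z1 sigma2(1) z2 z3 m(1) z4 ab ae y wb we wx N_eq by auto
  have dim_w: "dim_vec w = n1 + n2 + n3 + n4 + p + r + N"
    using dims N_eq by (simp add: w_def c_lik_def)
  have "dy_exponent alpha_M kappa_M psiM w = (\<Sum>l<dim_vec w. g l)"
    unfolding g_def by (rule dy_exponent_eq_sum) (simp_all add: dim_w dim_alpha_M kappa_M_def dims)
  also have "\<dots> = (\<Sum>i<n1. g i) + (\<Sum>i<n2. g (n1 + i)) + (\<Sum>i<n3. g (n1 + n2 + i))
      + (\<Sum>i<n4. g (n1 + n2 + n3 + i)) + (\<Sum>i<p. g (n1 + n2 + n3 + n4 + i))
      + (\<Sum>i<r. g (n1 + n2 + n3 + n4 + p + i)) + (\<Sum>i<N. g (n1 + n2 + n3 + n4 + p + r + i))"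
    unfolding dim_w sum_lessThan_add ..
  finally have total: "dy_exponent alpha_M kappa_M psiM w = \<dots>" .
  note defs = g_def alpha_M_def kappa_M_def w_def c_lik_def
  note simps = psi_M_def dims N_eq
  have "(\<Sum>i<n1. g i) = (\<Sum>i<n1. z1 $ i / sigma2 $ i * y $ i - 1 / (2 * sigma2 $ i) * psi1 (y $ i))"
    unfolding defs by (rule sum.cong) (simp_all add: simps)
  moreover have "(\<Sum>i<n2. g (n1 + i))
      = (\<Sum>i<n2. real (z2 $ i) * y $ (n1 + i) - psi2 (y $ (n1 + i))) + (\<Sum>i<n2. alpha_xi * y $ (n1 + i))"
    unfolding sum.distrib[symmetric] defs by (rule sum.cong) (simp_all add: simps algebra_simps)
  moreover have "(\<Sum>i<n3. g (n1 + n2 + i))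
      = (\<Sum>i<n3. real (z3 $ i) * y $ (n1 + n2 + i) - real (m $ i) * psi3 (y $ (n1 + n2 + i)))
        + (\<Sum>i<n3. alpha_xi * y $ (n1 + n2 + i) - 2 * alpha_xi * psi3 (y $ (n1 + n2 + i)))"
    unfolding sum.distrib[symmetric] defs by (rule sum.cong) (simp_all add: simps algebra_simps)
  moreover have "(\<Sum>i<n4. g (n1 + n2 + n3 + i))
      = (\<Sum>i<n4. - ((\<nu> + 1) / 2) * psi4 \<nu> (y $ (n1 + n2 + n3 + i) - z4 $ i))"
    unfolding defs by (rule sum.cong) (simp_all add: simps)
  moreover have "(\<Sum>i<p. g (n1 + n2 + n3 + n4 + i)) = dy_exponent alpha_b kappa_b psib wb"
    unfolding defs using dims by (simp add: dy_exponent_eq_sum simps)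
  moreover have "(\<Sum>i<r. g (n1 + n2 + n3 + n4 + p + i)) = dy_exponent alpha_e kappa_e psie we"
    unfolding defs using dims by (simp add: dy_exponent_eq_sum simps)
  moreover have "(\<Sum>i<N. g (n1 + n2 + n3 + n4 + p + r + i)) = (\<Sum>i<N. - psi1 (wx $ i) / 2)"
    unfolding defs by (rule sum.cong) (simp_all add: simps)
  ultimately show ?thesis
    using total xi_prior_exponent_eq[OF y wx] unfolding w_def likelihood_exponent_def by linarith
qed

lemma location_residual:
  assumes xi: "xi \<in> carrier_vec N" and beta: "beta \<in> carrier_vec p" and eta: "eta \<in> carrier_vec r"
    and q: "q \<in> carrier_vec N"
  defines "qq \<equiv> Q *\<^sub>v q"
  shows "minv V_M *\<^sub>v ((xi @\<^sub>v beta @\<^sub>v eta @\<^sub>v q) - V_M *\<^sub>v c_M)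
    = (xi + X *\<^sub>v beta + G *\<^sub>v eta + vec N (\<lambda>i. qq $ i) - c_lik)
      @\<^sub>v (beta + vec p (\<lambda>i. qq $ (N + i))) @\<^sub>v (eta + vec r (\<lambda>i. qq $ (N + p + i)))
      @\<^sub>v (xi + vec N (\<lambda>i. qq $ (N + p + r + i)))"
proof -
  define qa qb qe qx where "qa = vec N (\<lambda>i. qq $ i)" and "qb = vec p (\<lambda>i. qq $ (N + i))"
    and "qe = vec r (\<lambda>i. qq $ (N + p + i))" and "qx = vec N (\<lambda>i. qq $ (N + p + r + i))"
  define h where "h = xi + X *\<^sub>v beta + G *\<^sub>v eta"
  have dim: "2 * N + p + r = N + p + r + N"
    by simp
  have H: "H \<in> carrier_mat (N + p + r + N) (N + p + r)"
    using H_mat_carrier[OF X G] .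
  note Q' = Q[unfolded dim]
  have carriers: "qa \<in> carrier_vec N" "qb \<in> carrier_vec p" "qe \<in> carrier_vec r" "qx \<in> carrier_vec N"
    "h \<in> carrier_vec N" "c_lik \<in> carrier_vec N"
    using X G xi beta eta z4 N_eq by (auto simp: qa_def qb_def qe_def qx_def h_def c_lik_def)
  have "qq \<in> carrier_vec (N + p + r + N)"
    using mult_mat_vec_carrier[OF Q' q] unfolding qq_def .
  then have qq_split: "qq = qa @\<^sub>v qb @\<^sub>v qe @\<^sub>v qx"
    by (intro eq_vecI) (auto simp: qa_def qb_def qe_def qx_def)
  have c_split: "c_M = c_lik @\<^sub>v 0\<^sub>v p @\<^sub>v 0\<^sub>v r @\<^sub>v 0\<^sub>v N"
    unfolding c_M_def c_lik_def using z4 N_eq by (intro eq_vecI) auto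
  have zeta: "xi @\<^sub>v beta @\<^sub>v eta \<in> carrier_vec (N + p + r)"
    using xi beta eta by (simp add: add.assoc)
  have zq: "xi @\<^sub>v beta @\<^sub>v eta @\<^sub>v q = (xi @\<^sub>v beta @\<^sub>v eta) @\<^sub>v q"
    by (simp add: append_vec_assoc)
  have c: "c_M \<in> carrier_vec (2 * N + p + r)"
    using z4 N_eq unfolding c_M_def carrier_vec_def by simp
  have "minv V_M *\<^sub>v ((xi @\<^sub>v beta @\<^sub>v eta @\<^sub>v q) - V_M *\<^sub>v c_M)
      = hcat H Q *\<^sub>v ((xi @\<^sub>v beta @\<^sub>v eta) @\<^sub>v q) - c_M"
    unfolding zq using zeta q c by (intro minv_V_M_mult_minus) (auto simp: dim)
  also have "hcat H Q *\<^sub>v ((xi @\<^sub>v beta @\<^sub>v eta) @\<^sub>v q) = (h @\<^sub>v beta @\<^sub>v eta @\<^sub>v xi) + (qa @\<^sub>v qb @\<^sub>v qe @\<^sub>v qx)"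
    unfolding hcat_mult_vec[OF H Q' zeta q] H_mat_mult_vec[OF X G xi beta eta] qq_def[symmetric] qq_split h_def ..
  also have "\<dots> = (h + qa) @\<^sub>v (beta + qb) @\<^sub>v (eta + qe) @\<^sub>v (xi + qx)"
    using carriers xi beta eta by (simp add: append_vec_add[of _ N _ _ "p + (r + N)"]
        append_vec_add[of _ p _ _ "r + N"] append_vec_add[of _ r _ _ N])
  also have "\<dots> - c_M = (h + qa - c_lik) @\<^sub>v (beta + qb) @\<^sub>v (eta + qe) @\<^sub>v (xi + qx)"
    unfolding c_split using carriers xi beta eta
    by (simp add: append_vec_minus[of _ N _ _ "p + (r + N)"] append_vec_minus[of _ p _ _ "r + N"]
        append_vec_minus[of _ r _ _ N])
  finally show ?thesis
    by (simp add: h_def qa_def qb_def qe_def qx_def)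
qed

lemma posterior_integrand_factorization:
  assumes \<theta>: "\<theta> \<in> space M" and y: "y \<in> carrier_vec N" and wx: "wx \<in> carrier_vec N"
    and beta: "beta \<in> carrier_vec p" "mu_b \<in> carrier_vec p"
    and eta: "eta \<in> carrier_vec r" "mu_e \<in> carrier_vec r"
  shows "prior \<theta> * likelihood n1 n2 n3 n4 z1 z2 z3 z4 sigma2 m \<nu> y
        * exp (dy_exponent a_xi k_xi (psi_xi n1 n2 n3 N \<nu>) (y @\<^sub>v wx))
        * dy_prior_factor (Db \<theta>) mu_b alpha_b kappa_b psib beta
        * dy_prior_factor (De \<theta>) mu_e alpha_e kappa_e psie eta * 1
      = posterior_const * (prior \<theta> * gcm_normalizer / (\<bar>det (D \<theta>)\<bar> * \<bar>det V_M\<bar>)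
        * exp (dy_exponent alpha_M kappa_M psiM
            (minv (D \<theta>) *\<^sub>v ((y - c_lik) @\<^sub>v (beta - mu_b) @\<^sub>v (eta - mu_e) @\<^sub>v (s2xi \<cdot>\<^sub>v wx)))))"
proof -
  have Db\<theta>: "Db \<theta> \<in> carrier_mat p p" "det (Db \<theta>) \<noteq> 0"
    using Db \<theta> invertible_mat_det_nonzero by blast+
  have De\<theta>: "De \<theta> \<in> carrier_mat r r" "det (De \<theta>) \<noteq> 0"
    using De \<theta> invertible_mat_det_nonzero by blast+
  define wb where "wb = minv (Db \<theta>) *\<^sub>v (beta - mu_b)"
  define we where "we = minv (De \<theta>) *\<^sub>v (eta - mu_e)"
  have wb_carrier: "wb \<in> carrier_vec p" and we_carrier: "we \<in> carrier_vec r"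
    using minv_inverse(3)[OF Db\<theta>] minv_inverse(3)[OF De\<theta>] beta eta by (simp_all add: wb_def we_def)
  have "minv (D \<theta>) *\<^sub>v ((y - c_lik) @\<^sub>v (beta - mu_b) @\<^sub>v (eta - mu_e) @\<^sub>v (s2xi \<cdot>\<^sub>v wx))
      = (y - c_lik) @\<^sub>v wb @\<^sub>v we @\<^sub>v wx"
    using y wx beta eta s2xi z4 N_eq
    by (subst minv_D_mat_mult_vec[OF Db\<theta> De\<theta>]) (auto simp: wb_def we_def c_lik_def)
  then have "dy_exponent alpha_M kappa_M psiM
      (minv (D \<theta>) *\<^sub>v ((y - c_lik) @\<^sub>v (beta - mu_b) @\<^sub>v (eta - mu_e) @\<^sub>v (s2xi \<cdot>\<^sub>v wx)))
      = likelihood_exponent y + dy_exponent a_xi k_xi (psi_xi n1 n2 n3 N \<nu>) (y @\<^sub>v wx)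
        + dy_exponent alpha_b kappa_b psib wb + dy_exponent alpha_e kappa_e psie we"
    using gcm_exponent_split[OF y wb_carrier we_carrier wx] by simp
  then show ?thesis
    using Db\<theta> De\<theta> s2xi det_V_M_nonzero gcm_normalizer_pos
    by (simp add: likelihood_exp_family dy_prior_factor_eq wb_def[symmetric] we_def[symmetric]
        det_D_mat posterior_const_def exp_add abs_mult field_simps)
qed

lemma posterior_eq_gcm:
  assumes xi: "xi \<in> carrier_vec N" and beta: "beta \<in> carrier_vec p" and eta: "eta \<in> carrier_vec r"
    and q: "q \<in> carrier_vec N"
  shows "posterior xi beta eta q
    = posterior_const * gcm_density M prior alpha_M kappa_M (V_M *\<^sub>v c_M) V_M D psiM (xi @\<^sub>v beta @\<^sub>v eta @\<^sub>v q)"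
proof -
  define qq where "qq = Q *\<^sub>v q"
  define mu_D where "mu_D = - vec N (\<lambda>i. qq $ i)"
  define mu_xi where "mu_xi = - ((1 / s2xi) \<cdot>\<^sub>v vec N (\<lambda>i. qq $ (N + p + r + i)))"
  define mu_b where "mu_b = - vec p (\<lambda>i. qq $ (N + i))"
  define mu_e where "mu_e = - vec r (\<lambda>i. qq $ (N + p + i))"
  define y where "y = X *\<^sub>v beta + G *\<^sub>v eta + xi - mu_D"
  define wx where "wx = (1 / s2xi) \<cdot>\<^sub>v xi - mu_xi"
  have carriers: "y \<in> carrier_vec N" "wx \<in> carrier_vec N" "mu_b \<in> carrier_vec p" "mu_e \<in> carrier_vec r"
    using X G xi beta eta by (simp_all add: y_def mu_D_def wx_def mu_xi_def mu_b_def mu_e_def)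
  have "A_mat N p r X G s2xi *\<^sub>v (xi @\<^sub>v beta @\<^sub>v eta) - (mu_D @\<^sub>v mu_xi)
      = (xi + X *\<^sub>v beta + G *\<^sub>v eta - mu_D) @\<^sub>v ((1 / s2xi) \<cdot>\<^sub>v xi - mu_xi)"
    unfolding A_mat_mult_vec[OF X G xi beta eta]
    by (rule append_vec_minus) (use X G xi beta eta in \<open>auto simp: mu_D_def mu_xi_def\<close>)
  also have "xi + X *\<^sub>v beta + G *\<^sub>v eta - mu_D = y"
    using X G xi beta eta by (intro eq_vecI) (auto simp: y_def mu_D_def algebra_simps)
  finally have xi_prior_arg: "A_mat N p r X G s2xi *\<^sub>v (xi @\<^sub>v beta @\<^sub>v eta) - (mu_D @\<^sub>v mu_xi) = y @\<^sub>v wx"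
    unfolding wx_def .
  have "xi + X *\<^sub>v beta + G *\<^sub>v eta + vec N (\<lambda>i. qq $ i) = y"
    using X G xi beta eta by (intro eq_vecI) (auto simp: y_def mu_D_def algebra_simps)
  moreover have "beta + vec p (\<lambda>i. qq $ (N + i)) = beta - mu_b"
    using beta by (intro eq_vecI) (auto simp: mu_b_def)
  moreover have "eta + vec r (\<lambda>i. qq $ (N + p + i)) = eta - mu_e"
    using eta by (intro eq_vecI) (auto simp: mu_e_def)
  moreover have "xi + vec N (\<lambda>i. qq $ (N + p + r + i)) = s2xi \<cdot>\<^sub>v wx"
    using xi s2xi by (intro eq_vecI) (auto simp: wx_def mu_xi_def field_simps)
  ultimately have residual: "minv V_M *\<^sub>v ((xi @\<^sub>v beta @\<^sub>v eta @\<^sub>v q) - V_M *\<^sub>v c_M)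
      = (y - c_lik) @\<^sub>v (beta - mu_b) @\<^sub>v (eta - mu_e) @\<^sub>v (s2xi \<cdot>\<^sub>v wx)"
    using location_residual[OF xi beta eta q] unfolding qq_def[symmetric] by simp
  show ?thesis
    unfolding posterior_def Let_def gcm_density_def dy_exponent_def[symmetric] gcm_normalizer_def[symmetric]
      qq_def[symmetric] mu_D_def[symmetric] mu_xi_def[symmetric] mu_b_def[symmetric] mu_e_def[symmetric]
      y_def[symmetric] a_xi_def[symmetric] k_xi_def[symmetric] xi_prior_arg residual
    using posterior_integrand_factorization[OF _ carriers(1,2) beta carriers(3) eta carriers(4)]
    by (rule trans[OF Bochner_Integration.integral_cong[OF refl] integral_mult_right_zero])
qed

end

theorem theorem3:
  fixes n1 n2 n3 n4 N p r :: nat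
    and z1 z4 sigma2 :: "real vec" and z2 z3 m :: "nat vec"
    and \<nu> s2xi alpha_xi :: real
    and X G Q :: "real mat"
    and alpha_b kappa_b alpha_e kappa_e :: "real vec"
    and psib psie :: "nat \<Rightarrow> real \<Rightarrow> real"
    and M :: "'t measure" and prior :: "'t \<Rightarrow> real"
    and Db De :: "'t \<Rightarrow> real mat"
  defines "N \<equiv> n1 + n2 + n3 + n4"
  assumes z1: "z1 \<in> carrier_vec n1" and z2: "z2 \<in> carrier_vec n2"
    and z3: "z3 \<in> carrier_vec n3" and z4: "z4 \<in> carrier_vec n4"
    and sigma2: "sigma2 \<in> carrier_vec n1" "\<forall>i<n1. sigma2 $ i > 0"
    and m: "m \<in> carrier_vec n3" "\<forall>i<n3. z3 $ i \<le> m $ i"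
    and nu: "\<nu> > 0"
    and XG: "X \<in> carrier_mat N p" "G \<in> carrier_mat N r"
    and s2xi: "s2xi > 0" and alpha_xi: "alpha_xi > 0"
    and ab: "alpha_b \<in> carrier_vec p" "kappa_b \<in> carrier_vec p"
    and ae: "alpha_e \<in> carrier_vec r" "kappa_e \<in> carrier_vec r"
    and psib: "\<forall>j<p. psib j \<in> {psi1, psi2, psi3, psi4 \<nu>}
                      \<and> dy_valid (psib j) (alpha_b $ j) (kappa_b $ j)"
    and psie: "\<forall>j<r. psie j \<in> {psi1, psi2, psi3, psi4 \<nu>}
                      \<and> dy_valid (psie j) (alpha_e $ j) (kappa_e $ j)"
    and Q: "Q \<in> carrier_mat (2 * N + p + r) N"
      "transpose_mat Q * Q = 1\<^sub>m N"
      "transpose_mat (H_mat N p r X G) * Q = 0\<^sub>m (N + p + r) N"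
    and prior: "prior \<in> borel_measurable M" "\<forall>\<theta>\<in>space M. prior \<theta> \<ge> 0"
      "integrable M prior" "(\<integral>\<theta>. prior \<theta> \<partial>M) = 1"
    and Db: "\<forall>\<theta>\<in>space M. Db \<theta> \<in> carrier_mat p p \<and> invertible_mat (Db \<theta>)"
    and De: "\<forall>\<theta>\<in>space M. De \<theta> \<in> carrier_mat r r \<and> invertible_mat (De \<theta>)"
  shows
    "let H = H_mat N p r X G;
         A = A_mat N p r X G s2xi;
         D = (\<lambda>\<theta>. D_mat N (Db \<theta>) (De \<theta>) s2xi);
         \<comment> \<open>unnormalized posterior f(zeta, q | z), with f(q) = 1\<close>
         post = (\<lambda>xi beta eta q.
           let Qq = Q *\<^sub>v q;
               mu_D = - vec N (\<lambda>i. Qq $ i);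
               mu_xi = - ((1 / s2xi) \<cdot>\<^sub>v vec N (\<lambda>i. Qq $ (N + p + r + i)));
               mu_b = - vec p (\<lambda>i. Qq $ (N + i));
               mu_e = - vec r (\<lambda>i. Qq $ (N + p + i));
               zeta = xi @\<^sub>v beta @\<^sub>v eta;
               y = X *\<^sub>v beta + G *\<^sub>v eta + xi - mu_D;
               a_xi = 0\<^sub>v n1 @\<^sub>v vec n2 (\<lambda>_. alpha_xi) @\<^sub>v vec n3 (\<lambda>_. alpha_xi)
                      @\<^sub>v 0\<^sub>v (n4 + N);
               k_xi = 0\<^sub>v (n1 + n2) @\<^sub>v vec n3 (\<lambda>_. 2 * alpha_xi) @\<^sub>v 0\<^sub>v n4
                      @\<^sub>v vec N (\<lambda>_. 1 / 2);
               u = A *\<^sub>v zeta - (mu_D @\<^sub>v mu_xi);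
               xi_factor = exp (scalar_prod a_xi u
                                - scalar_prod k_xi (psi_vec (psi_xi n1 n2 n3 N \<nu>) u))
           in \<integral>\<theta>. prior \<theta> * likelihood n1 n2 n3 n4 z1 z2 z3 z4 sigma2 m \<nu> y * xi_factor
                   * dy_prior_factor (Db \<theta>) mu_b alpha_b kappa_b psib beta
                   * dy_prior_factor (De \<theta>) mu_e alpha_e kappa_e psie eta * 1 \<partial>M);
         alpha_M = vec n1 (\<lambda>i. z1 $ i / sigma2 $ i)
                   @\<^sub>v vec n2 (\<lambda>i. real (z2 $ i) + alpha_xi)
                   @\<^sub>v vec n3 (\<lambda>i. real (z3 $ i) + alpha_xi)
                   @\<^sub>v 0\<^sub>v n4 @\<^sub>v alpha_b @\<^sub>v alpha_e @\<^sub>v 0\<^sub>v N;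
         kappa_M = vec n1 (\<lambda>i. 1 / (2 * sigma2 $ i))
                   @\<^sub>v vec n2 (\<lambda>_. 1)
                   @\<^sub>v vec n3 (\<lambda>i. real (m $ i) + 2 * alpha_xi)
                   @\<^sub>v vec n4 (\<lambda>_. (\<nu> + 1) / 2)
                   @\<^sub>v kappa_b @\<^sub>v kappa_e @\<^sub>v vec N (\<lambda>_. 1 / 2);
         c = 0\<^sub>v (n1 + n2 + n3) @\<^sub>v z4 @\<^sub>v 0\<^sub>v (N + p + r);
         V_M = minv (hcat H Q);
         mu_M = ((minv (transpose_mat H * H) * transpose_mat H) @\<^sub>r transpose_mat Q) *\<^sub>v c
     in \<exists>C > 0. \<forall>xi \<in> carrier_vec N. \<forall>beta \<in> carrier_vec p. \<forall>eta \<in> carrier_vec r.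
          \<forall>q \<in> carrier_vec N.
            post xi beta eta q
            = C * gcm_density M prior alpha_M kappa_M mu_M V_M D
                    (psi_M n1 n2 n3 N p r \<nu> psib psie) (xi @\<^sub>v beta @\<^sub>v eta @\<^sub>v q)"
proof -
  \<comment> \<open>The identity holds pointwise in \<open>\<theta>\<close>.\<close>
  interpret glmm_posterior N p r X G Q n1 n2 n3 n4 z1 z4 sigma2 z2 z3 m \<nu> s2xi alpha_xi
      alpha_b kappa_b alpha_e kappa_e psib psie M prior Db De
    using assms by unfold_locales (simp_all add: N_def)
  show ?thesis
    unfolding Let_def minv_hcat_H_Q alpha_M_def[symmetric] kappa_M_def[symmetric] c_M_def[symmetric]
      V_M_def[symmetric]
    using posterior_const_pos posterior_eq_gcm[unfolded posterior_def Let_def] by blast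
qed

end
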